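(* Let $z_\delta^{(n)}=h(v_\delta^{(n)})$. There exists a constant $C_{17}>0$ independent of $n\in\mathbb{N}$ and $\delta>0$ such that $$\left|\int_0^T\!\!\int_0^1(\partial_t z_\delta^{(n)})\,\eta\,dx\,dt\right|\le C_{17}|\eta|_{L^2(0,T;X)}\qquad\text{for all }\eta\in L^2(0,T;X).$$
   Context: $Q(T)=(0,T)\times(0,1)$, $H=L^2(0,1)$, $X=H^1(0,1)$, $T>0$. Assume $h\in C^2(\mathbb{R})$ with $\delta_h\le h'\le C_h$, $|h''|\le C_h$; $b\in C^2(\mathbb{R})$ with $\delta_b\le b\le C_b$, $|b'|,|b''|\le C_b$ (positive constants); $p\in L^2(0,T;H)$; $v_0\in H$. Extend $p$ by zero to $\mathbb{R}^2$ and let $\rho_\delta=J^{(2)}_\delta\ast p$ ($J^{(2)}_\delta$ a standard mollifier on $\mathbb{R}^2$). For $n\in\mathbb{N}$ let $\Delta x^{(n)}=1/n$, $\chi_i^{(n)}$ the characteristic function of $[(i-1)\Delta x^{(n)},i\Delta x^{(n)})$, $\rho_{\delta,i}^{(n)}(t)=\frac1{\Delta x^{(n)}}\int_{(i-1)\Delta x^{(n)}}^{i\Delta x^{(n)}}\rho_\delta(t,\xi)d\xi$, $v_{0,i}^{(n)}=\frac1{\Delta x^{(n)}}\int_{(i-1)\Delta x^{(n)}}^{i\Delta x^{(n)}}v_0(\xi)d\xi$. Let $(v_{\delta,1}^{(n)},\dots,v_{\delta,n}^{(n)})$ be the unique $C^1$ solution of (writing $v_i=v_{\delta,i}^{(n)}$,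 $\rho_i=\rho_{\delta,i}^{(n)}$, $\Delta x=\Delta x^{(n)}$, $a_i=\frac{v_{i+1}-v_i}{\Delta x}+b(\frac{v_i+v_{i+1}}2)\rho_i$, $i=1,\dots,n-1$): $h'(v_1)v_1'=a_1/\Delta x$; $h'(v_i)v_i'=(a_i-a_{i-1})/\Delta x$ for $2\le i\le n-1$; $h'(v_n)v_n'=-a_{n-1}/\Delta x$; $v_i(0)=v_{0,i}^{(n)}$. Set $v_\delta^{(n)}(t,x)=\sum_{i=1}^n\chi_i^{(n)}(x)v_{\delta,i}^{(n)}(t)$ on $Q(T)$. *)

theory Defs
  imports "HOL-Analysis.Analysis"
begin

definition Qset :: "real \<Rightarrow> (real \<times> real) set" where
  "Qset T = {0<..<T} \<times> {0<..<1}"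

definition bump :: "real \<times> real \<Rightarrow> real" where
  "bump y = (if norm y < 1 then exp (1 / ((norm y)\<^sup>2 - 1)) else 0)"

definition stdJ :: "real \<times> real \<Rightarrow> real" where
  "stdJ y = bump y / (\<integral>z. bump z \<partial>lborel)"

definition Jdelta :: "real \<Rightarrow> real \<times> real \<Rightarrow> real" where
  "Jdelta \<delta> y = stdJ ((1 / \<delta>) *\<^sub>R y) / \<delta>\<^sup>2"

definition rho_delta :: "real \<Rightarrow> (real \<times> real \<Rightarrow> real) \<Rightarrow> real \<Rightarrow> real \<times> real \<Rightarrow> real" where
  "rho_delta T p \<delta> q = (\<integral>y. Jdelta \<delta> (q - y) * (indicator (Qset T) y * p y) \<partial>lborel)"

definition dx :: "nat \<Rightarrow> real" where
  "dx n = 1 / real n"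

definition cell :: "nat \<Rightarrow> nat \<Rightarrow> real set" where
  "cell n i = {(real i - 1) * dx n ..< real i * dx n}"

definition cell_avg :: "nat \<Rightarrow> (real \<Rightarrow> real) \<Rightarrow> nat \<Rightarrow> real" where
  "cell_avg n f i = (1 / dx n) * (\<integral>\<xi>. indicator (cell n i) \<xi> * f \<xi> \<partial>lborel)"

text \<open>Discrete flux a_i for 1 <= i <= n-1; set to 0 for i = 0 and i = n, so that the
  three equations of the scheme read uniformly h'(v_i) v_i' = (a_i - a_(i-1))/dx.\<close>
definition flux :: "(real \<Rightarrow> real) \<Rightarrow> nat \<Rightarrow> (nat \<Rightarrow> real \<Rightarrow> real) \<Rightarrow> (nat \<Rightarrow> real \<Rightarrow> real)
                    \<Rightarrow> nat \<Rightarrow> real \<Rightarrow> real" where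
  "flux b n v r i t =
     (if 1 \<le> i \<and> i \<le> n - 1
      then (v (i + 1) t - v i t) / dx n + b ((v i t + v (i + 1) t) / 2) * r i t
      else 0)"

definition is_scheme_solution ::
  "real \<Rightarrow> (real \<Rightarrow> real) \<Rightarrow> (real \<Rightarrow> real) \<Rightarrow> (real \<times> real \<Rightarrow> real) \<Rightarrow> (real \<Rightarrow> real)
   \<Rightarrow> nat \<Rightarrow> real \<Rightarrow> (nat \<Rightarrow> real \<Rightarrow> real) \<Rightarrow> (nat \<Rightarrow> real \<Rightarrow> real) \<Rightarrow> bool" where
  "is_scheme_solution T h' b p v0 n \<delta> v vd \<longleftrightarrow>
     (let r = (\<lambda>i t. cell_avg n (\<lambda>\<xi>. rho_delta T p \<delta> (t, \<xi>)) i) in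
      \<forall>i\<in>{1..n}.
        (\<forall>t\<in>{0..T}. (v i has_real_derivative vd i t) (at t within {0..T})) \<and>
        continuous_on {0..T} (vd i) \<and>
        v i 0 = cell_avg n v0 i \<and>
        (\<forall>t\<in>{0..T}. h' (v i t) * vd i t = (flux b n v r i t - flux b n v r (i - 1) t) / dx n))"

definition vpc :: "nat \<Rightarrow> (nat \<Rightarrow> real \<Rightarrow> real) \<Rightarrow> real \<Rightarrow> real \<Rightarrow> real" where
  "vpc n v t x = (\<Sum>i=1..n. indicator (cell n i) x * v i t)"

text \<open>C_c^infinity(0,1) test functions: phi k is the k-th derivative of phi 0.\<close>
definition test_fun :: "(nat \<Rightarrow> real \<Rightarrow> real) \<Rightarrow> bool" where
  "test_fun \<phi> \<longleftrightarrow> (\<forall>k x. (\<phi> k has_real_derivative \<phi> (Suc k) x) (at x)) \<and>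
                    (\<exists>a b. 0 < a \<and> a \<le> b \<and> b < 1 \<and> (\<forall>x. x \<notin> {a..b} \<longrightarrow> \<phi> 0 x = 0))"

definition weak_deriv01 :: "(real \<Rightarrow> real) \<Rightarrow> (real \<Rightarrow> real) \<Rightarrow> bool" where
  "weak_deriv01 u u' \<longleftrightarrow>
     (\<forall>\<phi>. test_fun \<phi> \<longrightarrow>
        (\<integral>x. indicator {0<..<1} x * (u x * \<phi> 1 x) \<partial>lborel) =
        - (\<integral>x. indicator {0<..<1} x * (u' x * \<phi> 0 x) \<partial>lborel))"

text \<open>eta in L^2(0,T;X), X = H^1(0,1), with eta_x its weak x-derivative:
  eta, eta_x in L^2(Q(T)) and for a.e. t, eta_x(t,.) is the weak derivative of eta(t,.).\<close>
definition in_L2X :: "real \<Rightarrow> (real \<times> real \<Rightarrow> real) \<Rightarrow> (real \<times> real \<Rightarrow> real) \<Rightarrow> bool" where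
  "in_L2X T \<eta> \<eta>x \<longleftrightarrow>
     \<eta> \<in> borel_measurable borel \<and> \<eta>x \<in> borel_measurable borel \<and>
     set_integrable lborel (Qset T) (\<lambda>q. (\<eta> q)\<^sup>2) \<and>
     set_integrable lborel (Qset T) (\<lambda>q. (\<eta>x q)\<^sup>2) \<and>
     (AE t in lborel. t \<in> {0<..<T} \<longrightarrow> weak_deriv01 (\<lambda>x. \<eta> (t, x)) (\<lambda>x. \<eta>x (t, x)))"

definition L2X_norm :: "real \<Rightarrow> (real \<times> real \<Rightarrow> real) \<Rightarrow> (real \<times> real \<Rightarrow> real) \<Rightarrow> real" where
  "L2X_norm T \<eta> \<eta>x = sqrt (\<integral>q. indicator (Qset T) q * ((\<eta> q)\<^sup>2 + (\<eta>x q)\<^sup>2) \<partial>lborel)"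

end

(* Write z_i = h(v_i) and a_i for the fluxes of the scheme. Testing the scheme with z_i gives
   d/dt sum_i dx z_i^2/2 = - sum_i a_i (z_(i+1) - z_i), and by the mean value theorem
   z_(i+1) - z_i = h'(xi) dx (a_i - b rho_i) with delta_h <= h'(xi) <= C_h. Hence the energy
   dissipates the discrete L^2 norm of the fluxes up to a source term in rho, and
   int_0^T sum_i dx a_i^2 is bounded in terms of h, b, |v0|_(L^2) and |p|_(L^2) only; the
   mollification does not increase the L^2 norm.

   On the i-th cell d/dt z = (a_i - a_(i-1))/dx, so summation by parts turns the integral of
   (d/dt z) eta into -1/dx sum_i a_i (E_(i+1) - E_i), where E_i is the integral of eta(t,.) over
   the i-th cell. Testing the weak derivative with smoothed dipoles 1_(a,a+d) - 1_(a+d,a+2d)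
   bounds |E_(i+1) - E_i| by dx times the L^1 norm of eta_x over two cells, and a weighted
   AM-GM inequality, optimised over its weight, gives the bound
   2 sqrt(C + 1) |eta|_(L^2(0,T;X)). *)

theory Submission
  imports Defs "HOL-Computational_Algebra.Polynomial"
begin

section \<open>Smooth functions\<close>

coinductive smooth :: "(real \<Rightarrow> real) \<Rightarrow> bool" where
  smoothI: "(\<And>x. (f has_real_derivative f' x) (at x)) \<Longrightarrow> smooth f' \<Longrightarrow> smooth f"

definition smooth_deriv :: "(real \<Rightarrow> real) \<Rightarrow> real \<Rightarrow> real" where
  "smooth_deriv f = (SOME f'. (\<forall>x. (f has_real_derivative f' x) (at x)) \<and> smooth f')"

lemma
  assumes "smooth f"
  shows smooth_deriv_has_derivative: "(f has_real_derivative smooth_deriv f x) (at x)"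
    and smooth_smooth_deriv: "smooth (smooth_deriv f)"
proof -
  have "\<exists>f'. (\<forall>x. (f has_real_derivative f' x) (at x)) \<and> smooth f'"
    using assms by (cases rule: smooth.cases) auto
  then have "(\<forall>x. (f has_real_derivative smooth_deriv f x) (at x)) \<and> smooth (smooth_deriv f)"
    unfolding smooth_deriv_def by (rule someI_ex)
  then show "(f has_real_derivative smooth_deriv f x) (at x)" "smooth (smooth_deriv f)" by auto
qed

lemma smooth_funpow_deriv: "smooth f \<Longrightarrow> smooth ((smooth_deriv ^^ k) f)"
  by (induction k) (auto intro: smooth_smooth_deriv)

lemma smooth_continuous_on:
  assumes "smooth f"
  shows "continuous_on S f"
proof -
  from assms obtain f' where "\<And>x. (f has_real_derivative f' x) (at x)"
    by (cases rule: smooth.cases) auto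
  then show ?thesis by (meson DERIV_isCont continuous_at_imp_continuous_on)
qed

lemma smooth_const: "smooth (\<lambda>x. c)"
  by (rule smooth.coinduct[where X="\<lambda>f. \<exists>c. f = (\<lambda>x. c)"])
     (auto intro!: exI[of _ "\<lambda>x. 0"] derivative_eq_intros)

text \<open>The derivative of a sum of products of smooth functions is again such a sum,
  which makes this class the right coinduction invariant for products.\<close>
lemma smooth_sum_list_products:
  assumes "\<forall>(f, g) \<in> set fgs. smooth f \<and> smooth g"
  shows "smooth (\<lambda>x. \<Sum>(f, g) \<leftarrow> fgs. f x * g x)"
proof -
  define D where "D fgs = concat (map (\<lambda>(f, g). [(smooth_deriv f, g), (f, smooth_deriv g)]) fgs)"
    for fgs :: "((real \<Rightarrow> real) \<times> (real \<Rightarrow> real)) list"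
  have deriv: "((\<lambda>x. \<Sum>(f, g) \<leftarrow> fgs. f x * g x) has_real_derivative
      (\<Sum>(f, g) \<leftarrow> D fgs. f x * g x)) (at x)"
    if "\<forall>(f, g) \<in> set fgs. smooth f \<and> smooth g" for fgs x
    using that
  proof (induction fgs)
    case Nil
    then show ?case by (simp add: D_def)
  next
    case (Cons fg fgs)
    obtain f g where fg: "fg = (f, g)" by force
    with Cons.prems have "smooth f" "smooth g" by auto
    from DERIV_add[OF DERIV_mult[OF smooth_deriv_has_derivative[OF \<open>smooth f\<close>]
          smooth_deriv_has_derivative[OF \<open>smooth g\<close>]] Cons.IH] Cons.prems
    show ?case by (simp add: fg D_def algebra_simps)
  qed
  have D_smooth: "\<forall>(f, g) \<in> set (D fgs). smooth f \<and> smooth g"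
    if "\<forall>(f, g) \<in> set fgs. smooth f \<and> smooth g" for fgs
    using that smooth_smooth_deriv by (fastforce simp: D_def)
  define X where "X h \<longleftrightarrow> (\<exists>fgs. (\<forall>(f, g) \<in> set fgs. smooth f \<and> smooth g)
      \<and> h = (\<lambda>x. \<Sum>(f, g) \<leftarrow> fgs. f x * g x))" for h
  show ?thesis
  proof (rule smooth.coinduct[where X=X])
    show "X (\<lambda>x. \<Sum>(f, g) \<leftarrow> fgs. f x * g x)" using assms unfolding X_def by blast
  next
    fix h assume "X h"
    then obtain fgs where fgs: "\<forall>(f, g) \<in> set fgs. smooth f \<and> smooth g"
      and h: "h = (\<lambda>x. \<Sum>(f, g) \<leftarrow> fgs. f x * g x)"
      unfolding X_def by blast
    have "X (\<lambda>x. \<Sum>(f, g) \<leftarrow> D fgs. f x * g x)" using D_smooth[OF fgs] unfolding X_def by blast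
    then show "\<exists>f f'. h = f \<and> (\<forall>x. (f has_real_derivative f' x) (at x)) \<and> (X f' \<or> smooth f')"
      using deriv[OF fgs] h by (intro exI[of _ h] exI[of _ "\<lambda>x. \<Sum>(f, g) \<leftarrow> D fgs. f x * g x"]) blast
  qed
qed

lemma smooth_mult: "smooth f \<Longrightarrow> smooth g \<Longrightarrow> smooth (\<lambda>x. f x * g x)"
  using smooth_sum_list_products[of "[(f, g)]"] by simp

lemma smooth_add: "smooth f \<Longrightarrow> smooth g \<Longrightarrow> smooth (\<lambda>x. f x + g x)"
  using smooth_sum_list_products[of "[(f, \<lambda>x. 1), (g, \<lambda>x. 1)]"] smooth_const by simp

lemma smooth_diff: "smooth f \<Longrightarrow> smooth g \<Longrightarrow> smooth (\<lambda>x. f x - g x)"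
  using smooth_add[of f "\<lambda>x. (-1) * g x"] smooth_mult[OF smooth_const, of g "-1"] by simp

lemma smooth_compose_affine:
  assumes "smooth f"
  shows "smooth (\<lambda>x. f (c * x + d))"
proof (rule smooth.coinduct[where X="\<lambda>h. \<exists>f k. smooth f \<and> h = (\<lambda>x. k * f (c * x + d))"])
  show "\<exists>f' k. smooth f' \<and> (\<lambda>x. f (c * x + d)) = (\<lambda>x. k * f' (c * x + d))"
    using assms by (intro exI[of _ f] exI[of _ 1]) auto
next
  fix h assume "\<exists>f k. smooth f \<and> h = (\<lambda>x. k * f (c * x + d))"
  then obtain f k where f: "smooth f" and h: "h = (\<lambda>x. k * f (c * x + d))" by blast
  have "(h has_real_derivative (k * c) * smooth_deriv f (c * x + d)) (at x)" for x
    unfolding h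
    by (rule DERIV_cmult[THEN DERIV_cong], rule DERIV_chain2[OF smooth_deriv_has_derivative[OF f]])
       (auto intro!: derivative_eq_intros)
  moreover have "smooth (smooth_deriv f)" using f by (rule smooth_smooth_deriv)
  ultimately show "\<exists>f f'. h = f \<and> (\<forall>x. (f has_real_derivative f' x) (at x))
      \<and> ((\<exists>f k. smooth f \<and> f' = (\<lambda>x. k * f (c * x + d))) \<or> smooth f')"
    by (intro exI[of _ h] exI[of _ "\<lambda>x. (k * c) * smooth_deriv f (c * x + d)"]) blast
qed

lemma smooth_divide:
  assumes w: "smooth w" and g: "smooth g" and nz: "\<And>x. g x \<noteq> 0"
  shows "smooth (\<lambda>x. w x / g x)"
proof (rule smooth.coinduct[where X="\<lambda>h. \<exists>w k. smooth w \<and> h = (\<lambda>x. w x / g x ^ k)"])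
  show "\<exists>w' k. smooth w' \<and> (\<lambda>x. w x / g x) = (\<lambda>x. w' x / g x ^ k)"
    using w by (intro exI[of _ w] exI[of _ 1]) auto
next
  fix h assume "\<exists>w k. smooth w \<and> h = (\<lambda>x. w x / g x ^ k)"
  then obtain w k where w: "smooth w" and h: "h = (\<lambda>x. w x / g x ^ k)" by blast
  define w' where "w' x = smooth_deriv w x * g x - real k * w x * smooth_deriv g x" for x
  have "(h has_real_derivative w' x / g x ^ Suc k) (at x)" for x
  proof -
    have "(h has_real_derivative (smooth_deriv w x * g x ^ k
        - w x * (real k * (smooth_deriv g x * g x ^ (k - Suc 0)))) / (g x ^ k * g x ^ k)) (at x)"
      unfolding h using nz[of x] DERIV_power[OF smooth_deriv_has_derivative[OF g], where n=k]
      by (intro DERIV_divide smooth_deriv_has_derivative[OF w]) auto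
    moreover have "(smooth_deriv w x * g x ^ k - w x * (real k * (smooth_deriv g x * g x ^ (k - Suc 0))))
        / (g x ^ k * g x ^ k) = w' x / g x ^ Suc k"
      using nz[of x] unfolding w'_def
      by (cases k) (simp_all add: field_simps power_add[symmetric])
    ultimately show ?thesis by simp
  qed
  moreover have "smooth w'"
    unfolding w'_def
    by (intro smooth_diff smooth_mult smooth_smooth_deriv w g smooth_const)
  ultimately show "\<exists>f f'. h = f \<and> (\<forall>x. (f has_real_derivative f' x) (at x))
      \<and> ((\<exists>w k. smooth w \<and> f' = (\<lambda>x. w x / g x ^ k)) \<or> smooth f')"
    by (intro exI[of _ h] exI[of _ "\<lambda>x. w' x / g x ^ Suc k"]) blast
qed

definition flat_exp :: "real poly \<Rightarrow> real \<Rightarrow> real" where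
  "flat_exp Q x = (if x > 0 then poly Q (1 / x) * exp (- (1 / x)) else 0)"

lemma tendsto_poly_div_exp_at_top: "((\<lambda>y::real. poly Q y / exp y) \<longlongrightarrow> 0) at_top"
proof -
  have "((\<lambda>y. \<Sum>i\<le>degree Q. coeff Q i * (y ^ i / exp y)) \<longlongrightarrow> 0) at_top"
    by (intro tendsto_null_sum tendsto_mult_right_zero tendsto_power_div_exp_0)
  then show ?thesis by (simp add: poly_altdef sum_divide_distrib)
qed

lemma flat_exp_has_derivative_0: "(flat_exp Q has_real_derivative 0) (at 0)"
proof -
  have "((\<lambda>x. (flat_exp Q x - flat_exp Q 0) / (x - 0)) \<longlongrightarrow> 0) (at_left 0)"
    by (rule tendsto_eventually)
       (auto simp: eventually_at_left_field flat_exp_def intro!: exI[of _ "-1"])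
  moreover have "((\<lambda>x. (flat_exp Q x - flat_exp Q 0) / (x - 0)) \<longlongrightarrow> 0) (at_right 0)"
    unfolding filterlim_at_right_to_top
  proof (rule Lim_transform_eventually[OF tendsto_poly_div_exp_at_top[of "[:0, 1:] * Q"]])
    show "\<forall>\<^sub>F x in at_top. poly ([:0, 1:] * Q) x / exp x
        = (flat_exp Q (inverse x) - flat_exp Q 0) / (inverse x - 0)"
      using eventually_gt_at_top[of 0]
      by eventually_elim (simp add: flat_exp_def exp_minus field_simps)
  qed
  ultimately show ?thesis
    unfolding has_field_derivative_iff filterlim_at_split by auto
qed

lemma flat_exp_has_derivative:
  "(flat_exp Q has_real_derivative flat_exp ([:0, 0, 1:] * (Q - pderiv Q)) x) (at x)"
proof -
  consider "x < 0" | "x = 0" | "x > 0" by linarith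
  then show ?thesis
  proof cases
    case 1
    have "((\<lambda>_. 0) has_real_derivative 0) (at x)" by (rule DERIV_const)
    then have "(flat_exp Q has_real_derivative 0) (at x)"
      by (rule has_field_derivative_transform_within_open[where S="{..<0}"])
         (use 1 in \<open>auto simp: flat_exp_def\<close>)
    then show ?thesis using 1 by (simp add: flat_exp_def)
  next
    case 2
    then show ?thesis using flat_exp_has_derivative_0[of Q] by (simp add: flat_exp_def)
  next
    case 3
    have "((\<lambda>x. poly Q (1 / x) * exp (- (1 / x))) has_real_derivative
        poly (pderiv Q) (1 / x) * (- 1 / x\<^sup>2) * exp (- (1 / x))
        + poly Q (1 / x) * (exp (- (1 / x)) * (1 / x\<^sup>2))) (at x)"
      using 3
      by (auto intro!: derivative_eq_intros DERIV_chain2[OF poly_DERIV] simp: power2_eq_square)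
    then have "(flat_exp Q has_real_derivative
        poly (pderiv Q) (1 / x) * (- 1 / x\<^sup>2) * exp (- (1 / x))
        + poly Q (1 / x) * (exp (- (1 / x)) * (1 / x\<^sup>2))) (at x)"
      by (rule has_field_derivative_transform_within_open[where S="{0<..}"])
         (use 3 in \<open>auto simp: flat_exp_def\<close>)
    moreover have "poly (pderiv Q) (1 / x) * (- 1 / x\<^sup>2) * exp (- (1 / x))
        + poly Q (1 / x) * (exp (- (1 / x)) * (1 / x\<^sup>2)) = flat_exp ([:0, 0, 1:] * (Q - pderiv Q)) x"
      using 3 by (simp add: flat_exp_def algebra_simps power2_eq_square divide_simps)
    ultimately show ?thesis by simp
  qed
qed

lemma smooth_flat_exp: "smooth (flat_exp Q)"
proof (rule smooth.coinduct[where X="\<lambda>h. \<exists>Q. h = flat_exp Q"])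
  fix h assume "\<exists>Q. h = flat_exp Q"
  then obtain Q where "h = flat_exp Q" by blast
  then show "\<exists>f f'. h = f \<and> (\<forall>x. (f has_real_derivative f' x) (at x)) \<and> ((\<exists>Q. f' = flat_exp Q) \<or> smooth f')"
    using flat_exp_has_derivative by blast
qed blast

lemma flat_exp_1_pos: "x > 0 \<Longrightarrow> flat_exp 1 x > 0"
  and flat_exp_1_eq_0: "x \<le> 0 \<Longrightarrow> flat_exp 1 x = 0"
  and flat_exp_1_nonneg: "flat_exp 1 x \<ge> 0"
  by (auto simp: flat_exp_def)

definition smooth_step :: "real \<Rightarrow> real" where
  "smooth_step x = flat_exp 1 x / (flat_exp 1 x + flat_exp 1 (1 - x))"

lemma smooth_step_denominator_pos: "flat_exp 1 x + flat_exp 1 (1 - x) > 0"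
  using flat_exp_1_pos[of x] flat_exp_1_pos[of "1 - x"] flat_exp_1_nonneg[of x] flat_exp_1_nonneg[of "1 - x"]
  by (cases "x > 0") auto

lemma smooth_smooth_step: "smooth smooth_step"
  unfolding smooth_step_def
proof (intro smooth_divide smooth_add smooth_flat_exp)
  show "smooth (\<lambda>x. flat_exp 1 (1 - x))"
    using smooth_compose_affine[OF smooth_flat_exp, where c="-1" and d=1] by simp
  show "flat_exp 1 x + flat_exp 1 (1 - x) \<noteq> 0" for x
    using smooth_step_denominator_pos[of x] by linarith
qed

lemma smooth_step_eq_0: "x \<le> 0 \<Longrightarrow> smooth_step x = 0"
  by (simp add: smooth_step_def flat_exp_1_eq_0)

lemma smooth_step_eq_1: "x \<ge> 1 \<Longrightarrow> smooth_step x = 1"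
  using smooth_step_denominator_pos[of x] by (simp add: smooth_step_def flat_exp_1_eq_0)

lemma smooth_step_bounds: "0 \<le> smooth_step x" "smooth_step x \<le> 1"
  using smooth_step_denominator_pos[of x] flat_exp_1_nonneg[of x] flat_exp_1_nonneg[of "1 - x"]
  by (auto simp: smooth_step_def divide_simps)

lemma integrable_indicator_mult_subset:
  fixes u :: "'a::euclidean_space \<Rightarrow> real"
  assumes "integrable lborel (\<lambda>x. indicator A x * u x)" "u \<in> borel_measurable borel"
    and "B \<subseteq> A" "B \<in> sets borel"
  shows "integrable lborel (\<lambda>x. indicator B x * u x)"
proof (rule Bochner_Integration.integrable_bound[OF assms(1)])
  show "(\<lambda>x. indicator B x * u x) \<in> borel_measurable lborel" using assms(2,4) by measurable
  show "AE x in lborel. norm (indicator B x * u x) \<le> norm (indicator A x * u x)"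
    using assms(3) by (intro AE_I2) (auto simp: indicator_def)
qed

lemma ennreal_abs_integral_le: "ennreal \<bar>\<integral>x. f x \<partial>M\<bar> \<le> (\<integral>\<^sup>+ x. ennreal \<bar>f x\<bar> \<partial>M)"
  for f :: "'a \<Rightarrow> real"
proof (cases "integrable M f")
  case True
  then show ?thesis using integral_norm_bound_ennreal[OF True] by simp
qed (simp add: not_integrable_integral_eq)

lemma nn_integral_lborel_iterated:
  assumes "g \<in> borel_measurable (borel :: (real \<times> real) measure)"
  shows "(\<integral>\<^sup>+ t. (\<integral>\<^sup>+ x. g (t, x) \<partial>lborel) \<partial>lborel) = (\<integral>\<^sup>+ q. g q \<partial>lborel)"
proof -
  have "g \<in> borel_measurable (lborel \<Otimes>\<^sub>M lborel)" using assms by (simp add: lborel_prod)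
  from lborel.nn_integral_fst[OF this] show ?thesis by (simp add: lborel_prod)
qed

lemma integrable_interval_if_square_integrable:
  fixes g :: "real \<Rightarrow> real"
  assumes "g \<in> borel_measurable borel" "integrable lborel (\<lambda>x. indicator {a<..<b} x * (g x)\<^sup>2)"
  shows "integrable lborel (\<lambda>x. indicator {a<..<b} x * g x)"
proof (rule Bochner_Integration.integrable_bound[where f="\<lambda>x. indicator {a<..<b} x + indicator {a<..<b} x * (g x)\<^sup>2"])
  show "integrable lborel (\<lambda>x. indicator {a<..<b} x + indicator {a<..<b} x * (g x)\<^sup>2)"
  proof (intro Bochner_Integration.integrable_add integrable_real_indicator)
    show "emeasure lborel {a<..<b} < \<infinity>"
      by (cases "a \<le> b") (simp_all add: ennreal_less_top)
  qed (use assms(2) in auto)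
  show "(\<lambda>x. indicator {a<..<b} x * g x) \<in> borel_measurable lborel" using assms(1) by measurable
  have "\<bar>g x\<bar> \<le> 1 + (g x)\<^sup>2" for x
    using zero_le_power2[of "\<bar>g x\<bar> - 1/2"] by (simp add: power2_eq_square algebra_simps)
  then show "AE x in lborel. norm (indicator {a<..<b} x * g x)
      \<le> norm (indicator {a<..<b} x + indicator {a<..<b} x * (g x)\<^sup>2)"
    by (intro AE_I2) (auto simp: indicator_def)
qed

lemma nn_integral_indicator_square_eq:
  fixes f :: "'a::euclidean_space \<Rightarrow> real"
  assumes "set_integrable lborel A (\<lambda>x. (f x)\<^sup>2)"
  shows "(\<integral>\<^sup>+ x. ennreal (indicator A x * (f x)\<^sup>2) \<partial>lborel) = ennreal (\<integral>x. indicator A x * (f x)\<^sup>2 \<partial>lborel)"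
  using assms by (intro nn_integral_eq_integral) (auto simp: set_integrable_def)

lemma integral_indicator_square_nonneg: "(\<integral>x. indicator A x * (f x)\<^sup>2 \<partial>M) \<ge> (0::real)"
  by (intro integral_nonneg_AE AE_I2) simp

lemma nn_integral_lborel_affine:
  fixes f :: "'a::euclidean_space \<Rightarrow> ennreal"
  assumes f: "f \<in> borel_measurable borel" and c: "c \<noteq> 0"
  shows "(\<integral>\<^sup>+ y. f y \<partial>lborel) = (\<integral>\<^sup>+ x. ennreal (\<bar>c\<bar> ^ DIM('a)) * f (t + c *\<^sub>R x) \<partial>lborel)"
proof -
  have "(\<integral>\<^sup>+ y. f y \<partial>lborel) = (\<integral>\<^sup>+ y. f y \<partial>density (distr lborel borel (\<lambda>x. t + c *\<^sub>R x)) (\<lambda>_. \<bar>c\<bar> ^ DIM('a)))"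
    using lborel_affine[OF c, of t] by (rule arg_cong)
  also have "\<dots> = (\<integral>\<^sup>+ y. ennreal (\<bar>c\<bar> ^ DIM('a)) * f y \<partial>distr lborel borel (\<lambda>x. t + c *\<^sub>R x))"
    using f by (subst nn_integral_density) auto
  also have "\<dots> = (\<integral>\<^sup>+ x. ennreal (\<bar>c\<bar> ^ DIM('a)) * f (t + c *\<^sub>R x) \<partial>lborel)"
    using f by (subst nn_integral_distr) auto
  finally show ?thesis .
qed

lemma nn_integral_lborel_reflect:
  fixes f :: "'a::euclidean_space \<Rightarrow> ennreal"
  assumes "f \<in> borel_measurable borel"
  shows "(\<integral>\<^sup>+ y. f (q - y) \<partial>lborel) = (\<integral>\<^sup>+ y. f y \<partial>lborel)"
  using nn_integral_lborel_affine[OF assms, of "-1" q] by simp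

lemma nn_integral_lborel_translate:
  fixes f :: "'a::euclidean_space \<Rightarrow> ennreal"
  assumes "f \<in> borel_measurable borel"
  shows "(\<integral>\<^sup>+ y. f (y - q) \<partial>lborel) = (\<integral>\<^sup>+ y. f y \<partial>lborel)"
proof -
  have "(\<lambda>y. f (y - q)) \<in> borel_measurable borel" using assms by measurable
  from nn_integral_lborel_affine[OF this, of 1 q] show ?thesis by simp
qed

lemma weighted_square_integral_le:
  fixes w g :: "'a::euclidean_space \<Rightarrow> real"
  assumes wm: "w \<in> borel_measurable borel" and gm: "g \<in> borel_measurable borel"
    and w0: "\<And>x. w x \<ge> 0" and W: "(\<integral>\<^sup>+ x. ennreal (w x) \<partial>lborel) \<le> ennreal W"
  shows "ennreal ((\<integral>x. w x * g x \<partial>lborel)\<^sup>2) \<le> ennreal W * (\<integral>\<^sup>+ x. ennreal (w x * (g x)\<^sup>2) \<partial>lborel)"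
proof -
  have abs_le: "ennreal \<bar>\<integral>x. w x * g x \<partial>lborel\<bar> \<le> (\<integral>\<^sup>+ x. ennreal (w x * \<bar>g x\<bar>) \<partial>lborel)"
  proof (cases "integrable lborel (\<lambda>x. w x * g x)")
    case True
    from integral_norm_bound_ennreal[OF True] show ?thesis using w0 by (simp add: abs_mult)
  qed (simp add: not_integrable_integral_eq)
  have "(\<lambda>x. ennreal (sqrt (w x))) \<in> borel_measurable lborel"
    "(\<lambda>x. ennreal (sqrt (w x) * \<bar>g x\<bar>)) \<in> borel_measurable lborel"
    using wm gm by measurable
  from Cauchy_Schwarz_nn_integral[OF this]
  have CS: "(\<integral>\<^sup>+ x. ennreal (w x * \<bar>g x\<bar>) \<partial>lborel)\<^sup>2
      \<le> (\<integral>\<^sup>+ x. ennreal (w x) \<partial>lborel) * (\<integral>\<^sup>+ x. ennreal (w x * (g x)\<^sup>2) \<partial>lborel)"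
    using w0
    by (simp add: ennreal_mult''[symmetric] ennreal_power mult.assoc[symmetric]
        real_sqrt_mult[symmetric] power_mult_distrib)
  have "ennreal ((\<integral>x. w x * g x \<partial>lborel)\<^sup>2) = (ennreal \<bar>\<integral>x. w x * g x \<partial>lborel\<bar>)\<^sup>2"
    by (simp add: ennreal_power)
  also have "\<dots> \<le> (\<integral>\<^sup>+ x. ennreal (w x * \<bar>g x\<bar>) \<partial>lborel)\<^sup>2"
    by (rule power_mono[OF abs_le]) simp
  also have "\<dots> \<le> ennreal W * (\<integral>\<^sup>+ x. ennreal (w x * (g x)\<^sup>2) \<partial>lborel)"
    using CS W by (meson mult_right_mono order_trans zero_le)
  finally show ?thesis .
qed

lemma weighted_square_integral_le_real:
  fixes w g :: "'a::euclidean_space \<Rightarrow> real"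
  assumes "w \<in> borel_measurable borel" "g \<in> borel_measurable borel"
    and w0: "\<And>x. w x \<ge> 0" and "(\<integral>\<^sup>+ x. ennreal (w x) \<partial>lborel) \<le> ennreal W" "W \<ge> 0"
    and int: "integrable lborel (\<lambda>x. w x * (g x)\<^sup>2)"
  shows "(\<integral>x. w x * g x \<partial>lborel)\<^sup>2 \<le> W * (\<integral>x. w x * (g x)\<^sup>2 \<partial>lborel)"
proof -
  have "(\<integral>\<^sup>+ x. ennreal (w x * (g x)\<^sup>2) \<partial>lborel) = ennreal (\<integral>x. w x * (g x)\<^sup>2 \<partial>lborel)"
    using int w0 by (intro nn_integral_eq_integral) auto
  moreover have "(\<integral>x. w x * (g x)\<^sup>2 \<partial>lborel) \<ge> 0" using w0 by (intro integral_nonneg_AE AE_I2) simp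
  ultimately show ?thesis using weighted_square_integral_le[OF assms(1-4)] assms(5)
    by (simp add: ennreal_mult[symmetric] ennreal_le_iff)
qed

lemma square_integral_interval_abs_le:
  fixes u :: "real \<Rightarrow> real"
  assumes [measurable]: "u \<in> borel_measurable borel" and L: "L > 0"
    and int: "integrable lborel (\<lambda>x. indicator {c<..<c + L} x * (u x)\<^sup>2)"
  shows "(\<integral>x. indicator {c<..<c + L} x * \<bar>u x\<bar> \<partial>lborel)\<^sup>2
    \<le> L * (\<integral>x. indicator {c<..<c + L} x * (u x)\<^sup>2 \<partial>lborel)"
proof -
  have W: "(\<integral>\<^sup>+ x. ennreal (indicator {c<..<c + L} x) \<partial>lborel) \<le> ennreal L"
    using L by (simp add: ennreal_indicator)
  have m: "indicator {c<..<c + L} \<in> borel_measurable borel" "(\<lambda>x. \<bar>u x\<bar>) \<in> borel_measurable borel"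
    by auto
  have "(\<integral>x. indicator {c<..<c + L} x * \<bar>u x\<bar> \<partial>lborel)\<^sup>2
      \<le> L * (\<integral>x. indicator {c<..<c + L} x * \<bar>u x\<bar>\<^sup>2 \<partial>lborel)"
    by (rule weighted_square_integral_le_real[OF m _ W]) (use L int in auto)
  then show ?thesis by simp
qed

lemma Qset_sets[measurable]: "Qset T \<in> sets borel"
  unfolding Qset_def by (intro borel_open open_Times) auto

lemma ennreal_mult_plus_mult:
  fixes a b c d :: real
  assumes "a \<ge> 0" "b \<ge> 0" "c \<ge> 0" "d \<ge> 0"
  shows "ennreal a * ennreal b + ennreal c * ennreal d = ennreal (a * b + c * d)"
  using assms by (simp add: ennreal_mult)

lemma AE_slice_square_integrable:
  fixes g :: "real \<times> real \<Rightarrow> real"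
  assumes [measurable]: "g \<in> borel_measurable borel" and int: "set_integrable lborel (Qset T) (\<lambda>q. (g q)\<^sup>2)"
  shows "AE t in lborel. t \<in> {0<..<T} \<longrightarrow> integrable lborel (\<lambda>x. indicator {0<..<1} x * (g (t, x))\<^sup>2)"
proof -
  have "(\<integral>\<^sup>+ t. (\<integral>\<^sup>+ x. ennreal (indicator (Qset T) (t, x) * (g (t, x))\<^sup>2) \<partial>lborel) \<partial>lborel)
      = (\<integral>\<^sup>+ q. ennreal (indicator (Qset T) q * (g q)\<^sup>2) \<partial>lborel)"
    by (rule nn_integral_lborel_iterated) measurable
  also have "\<dots> \<noteq> \<infinity>"
    using nn_integral_indicator_square_eq[OF int] by simp
  finally have "AE t in lborel. (\<integral>\<^sup>+ x. ennreal (indicator (Qset T) (t, x) * (g (t, x))\<^sup>2) \<partial>lborel) \<noteq> \<infinity>"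
    by (intro nn_integral_PInf_AE) measurable
  then show ?thesis
  proof eventually_elim
    case (elim t)
    show ?case
    proof
      assume t: "t \<in> {0<..<T}"
      then have "indicator (Qset T) (t, x) = (indicator {0<..<1} x :: real)" for x
        by (simp add: Qset_def indicator_def)
      then show "integrable lborel (\<lambda>x. indicator {0<..<1} x * (g (t, x))\<^sup>2)"
        using elim by (intro integrableI_bounded) (auto simp: top.not_eq_extremum)
    qed
  qed
qed

lemma in_L2X_AE_slices:
  assumes "in_L2X T \<eta> \<eta>x"
  shows "AE t in lborel. t \<in> {0<..<T} \<longrightarrow> weak_deriv01 (\<lambda>x. \<eta> (t, x)) (\<lambda>x. \<eta>x (t, x))
    \<and> integrable lborel (\<lambda>x. indicator {0<..<1} x * (\<eta> (t, x))\<^sup>2)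
    \<and> integrable lborel (\<lambda>x. indicator {0<..<1} x * (\<eta>x (t, x))\<^sup>2)"
proof -
  from assms have meas: "\<eta> \<in> borel_measurable borel" "\<eta>x \<in> borel_measurable borel"
    and square: "set_integrable lborel (Qset T) (\<lambda>q. (\<eta> q)\<^sup>2)" "set_integrable lborel (Qset T) (\<lambda>q. (\<eta>x q)\<^sup>2)"
    and wd: "AE t in lborel. t \<in> {0<..<T} \<longrightarrow> weak_deriv01 (\<lambda>x. \<eta> (t, x)) (\<lambda>x. \<eta>x (t, x))"
    unfolding in_L2X_def by auto
  from wd AE_slice_square_integrable[OF meas(1) square(1)] AE_slice_square_integrable[OF meas(2) square(2)]
  show ?thesis by eventually_elim blast
qed

lemma nn_integral_slices_le_L2X_norm:
  assumes "in_L2X T \<eta> \<eta>x"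
  shows "(\<integral>\<^sup>+ t. (\<integral>\<^sup>+ x. ennreal (indicator (Qset T) (t, x) * (\<eta>x (t, x))\<^sup>2) \<partial>lborel) \<partial>lborel)
    \<le> ennreal ((L2X_norm T \<eta> \<eta>x)\<^sup>2)"
proof -
  define N2 where "N2 = (\<integral>q. indicator (Qset T) q * ((\<eta> q)\<^sup>2 + (\<eta>x q)\<^sup>2) \<partial>lborel)"
  from assms have [measurable]: "\<eta>x \<in> borel_measurable borel"
    and "set_integrable lborel (Qset T) (\<lambda>q. (\<eta> q)\<^sup>2)" "set_integrable lborel (Qset T) (\<lambda>q. (\<eta>x q)\<^sup>2)"
    unfolding in_L2X_def by auto
  then have int: "integrable lborel (\<lambda>q. indicator (Qset T) q * ((\<eta> q)\<^sup>2 + (\<eta>x q)\<^sup>2))"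
    unfolding set_integrable_def by (simp add: distrib_left)
  have "(\<integral>\<^sup>+ t. (\<integral>\<^sup>+ x. ennreal (indicator (Qset T) (t, x) * (\<eta>x (t, x))\<^sup>2) \<partial>lborel) \<partial>lborel)
      = (\<integral>\<^sup>+ q. ennreal (indicator (Qset T) q * (\<eta>x q)\<^sup>2) \<partial>lborel)"
    by (rule nn_integral_lborel_iterated) measurable
  also have "\<dots> \<le> (\<integral>\<^sup>+ q. ennreal (indicator (Qset T) q * ((\<eta> q)\<^sup>2 + (\<eta>x q)\<^sup>2)) \<partial>lborel)"
    by (intro nn_integral_mono ennreal_leI) (auto simp: indicator_def)
  also have "\<dots> = ennreal N2" unfolding N2_def using int by (intro nn_integral_eq_integral) auto
  also have "N2 = (L2X_norm T \<eta> \<eta>x)\<^sup>2"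
    unfolding N2_def L2X_norm_def by (simp add: integral_nonneg_AE)
  finally show ?thesis .
qed

section \<open>Smooth dipoles and weak derivatives\<close>

definition plateau :: "real \<Rightarrow> real \<Rightarrow> real \<Rightarrow> real \<Rightarrow> real" where
  "plateau a d e x = smooth_step ((x - a) / e - 1) * smooth_step ((a + d - x) / e - 1)"

lemma smooth_plateau:
  assumes "e > 0"
  shows "smooth (plateau a d e)"
proof -
  have "smooth (\<lambda>x. smooth_step ((1 / e) * x + (- a / e - 1)) * smooth_step ((- 1 / e) * x + ((a + d) / e - 1)))"
    by (intro smooth_mult smooth_compose_affine smooth_smooth_step)
  moreover have "smooth_step ((x - a) / e - 1) = smooth_step ((1 / e) * x + (- a / e - 1))"
    "smooth_step ((a + d - x) / e - 1) = smooth_step ((- 1 / e) * x + ((a + d) / e - 1))" for x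
    by (rule arg_cong[where f=smooth_step], simp add: diff_divide_distrib)+
  ultimately show ?thesis unfolding plateau_def[abs_def] by simp
qed

lemma plateau_bounds: "0 \<le> plateau a d e x" "plateau a d e x \<le> 1"
  unfolding plateau_def using smooth_step_bounds by (auto intro: mult_le_one)

lemma plateau_eq_0:
  assumes "e > 0" "x \<le> a + e \<or> x \<ge> a + d - e"
  shows "plateau a d e x = 0"
proof -
  have "(x - a) / e - 1 \<le> 0 \<or> (a + d - x) / e - 1 \<le> 0"
    using assms by (auto simp: field_simps)
  then show ?thesis unfolding plateau_def using smooth_step_eq_0 by auto
qed

lemma plateau_eq_1:
  assumes "e > 0" "a + 2 * e \<le> x" "x \<le> a + d - 2 * e"
  shows "plateau a d e x = 1"
proof -
  have "(x - a) / e - 1 \<ge> 1" "(a + d - x) / e - 1 \<ge> 1"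
    using assms by (auto simp: field_simps)
  then show ?thesis unfolding plateau_def using smooth_step_eq_1 by auto
qed

lemma plateau_tendsto_indicator:
  assumes "d > 0"
  shows "(\<lambda>k. plateau a d (d / (real k + 4)) x) \<longlonglongrightarrow> indicator {a<..<a + d} x"
proof (cases "x \<in> {a<..<a + d}")
  case True
  define m where "m = min (x - a) (a + d - x)"
  have m: "m > 0" using True by (auto simp: m_def)
  obtain N :: nat where N: "2 * d / m < real N" using reals_Archimedean2 by blast
  have "plateau a d (d / (real k + 4)) x = 1" if "N \<le> k" for k
  proof -
    have "2 * d / m < real k + 4" using N that by linarith
    then have "2 * (d / (real k + 4)) \<le> m" using m by (simp add: field_simps)
    then show ?thesis using assms by (intro plateau_eq_1) (auto simp: m_def)
  qed
  then show ?thesis using True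
    by (intro tendsto_eventually) (auto simp: eventually_sequentially)
next
  case False
  have "plateau a d (d / (real k + 4)) x = 0" for k
  proof (rule plateau_eq_0)
    show "d / (real k + 4) > 0" using assms by simp
    then show "x \<le> a + d / (real k + 4) \<or> x \<ge> a + d - d / (real k + 4)" using False by auto
  qed
  then show ?thesis using False by simp
qed

definition plateau_primitive :: "real \<Rightarrow> real \<Rightarrow> real \<Rightarrow> real \<Rightarrow> real" where
  "plateau_primitive a d e x = integral {a..x} (plateau a d e)"

lemma plateau_integrable_on: "e > 0 \<Longrightarrow> plateau a d e integrable_on {u..v}"
  by (intro integrable_continuous_interval smooth_continuous_on smooth_plateau)

lemma plateau_primitive_eq_0:
  assumes "e > 0" "y \<le> a + e"
  shows "plateau_primitive a d e y = 0"
proof (cases "y < a")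
  case False
  have "integral {a..y} (plateau a d e) = integral {a..y} (\<lambda>_. 0)"
    using assms by (intro Henstock_Kurzweil_Integration.integral_cong plateau_eq_0) auto
  then show ?thesis by (simp add: plateau_primitive_def)
qed (simp add: plateau_primitive_def)

lemma plateau_primitive_eq:
  assumes "e > 0" "a \<le> y" "y \<le> y'" "\<And>z. y \<le> z \<Longrightarrow> z \<le> y' \<Longrightarrow> plateau a d e z = 0"
  shows "plateau_primitive a d e y' = plateau_primitive a d e y"
proof -
  have "integral {a..y} (plateau a d e) + integral {y..y'} (plateau a d e) = integral {a..y'} (plateau a d e)"
    using assms by (intro Henstock_Kurzweil_Integration.integral_combine plateau_integrable_on) auto
  moreover have "integral {y..y'} (plateau a d e) = integral {y..y'} (\<lambda>_. 0)"
    using assms by (intro Henstock_Kurzweil_Integration.integral_cong) auto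
  ultimately show ?thesis by (simp add: plateau_primitive_def)
qed

lemma plateau_primitive_has_derivative:
  assumes "e > 0"
  shows "(plateau_primitive a d e has_real_derivative plateau a d e x) (at x)"
proof (cases "x < a + e")
  case True
  have "((\<lambda>_. 0) has_real_derivative 0) (at x)" by (rule DERIV_const)
  then have "(plateau_primitive a d e has_real_derivative 0) (at x)"
  proof (rule has_field_derivative_transform_within_open[where S="{..<a + e}"])
    show "0 = plateau_primitive a d e y" if "y \<in> {..<a + e}" for y
      using that assms by (simp add: plateau_primitive_eq_0)
  qed (use True in auto)
  then show ?thesis using plateau_eq_0[of e x a d] True assms by simp
next
  case False
  then have x: "x \<in> interior {a..x + 1}" using assms by auto
  have "((\<lambda>x. integral {a..x} (plateau a d e)) has_real_derivative plateau a d e x) (at x within {a..x + 1})"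
    using x interior_subset
    by (intro integral_has_real_derivative smooth_continuous_on smooth_plateau assms) blast
  then show ?thesis unfolding plateau_primitive_def[abs_def] at_within_interior[OF x] .
qed

lemma plateau_primitive_bounds:
  assumes "e > 0" "2 * e \<le> d"
  shows "0 \<le> plateau_primitive a d e y" "plateau_primitive a d e y \<le> d"
proof -
  show "0 \<le> plateau_primitive a d e y"
    unfolding plateau_primitive_def using assms
    by (cases "a \<le> y") (auto intro!: integral_nonneg plateau_integrable_on simp: plateau_bounds)
  have le: "plateau_primitive a d e y \<le> y - a" if "a \<le> y" for y
  proof -
    have "integral {a..y} (plateau a d e) \<le> integral {a..y} (\<lambda>_. 1)"
      using assms by (intro integral_le plateau_integrable_on) (auto simp: plateau_bounds)
    then show ?thesis using that by (simp add: plateau_primitive_def)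
  qed
  show "plateau_primitive a d e y \<le> d"
  proof (cases "y \<le> a + d")
    case True
    then show ?thesis
      using le[of y] assms by (cases "a \<le> y") (auto simp: plateau_primitive_def)
  next
    case False
    then have "plateau_primitive a d e y = plateau_primitive a d e (a + d)"
      using assms by (intro plateau_primitive_eq plateau_eq_0) auto
    then show ?thesis using le[of "a + d"] assms by simp
  qed
qed

definition dipole :: "real \<Rightarrow> real \<Rightarrow> real \<Rightarrow> real \<Rightarrow> real" where
  "dipole a d e x = plateau a d e x - plateau a d e (x - d)"

definition dipole_primitive :: "real \<Rightarrow> real \<Rightarrow> real \<Rightarrow> real \<Rightarrow> real" where
  "dipole_primitive a d e x = plateau_primitive a d e x - plateau_primitive a d e (x - d)"

lemma smooth_dipole:
  assumes "e > 0"
  shows "smooth (dipole a d e)"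
proof -
  have "smooth (\<lambda>x. plateau a d e x - plateau a d e (1 * x + - d))"
    by (intro smooth_diff smooth_compose_affine smooth_plateau assms)
  then show ?thesis unfolding dipole_def[abs_def] by simp
qed

lemma dipole_primitive_has_derivative:
  assumes "e > 0"
  shows "(dipole_primitive a d e has_real_derivative dipole a d e x) (at x)"
proof -
  have "((\<lambda>x. plateau_primitive a d e x - plateau_primitive a d e (x - d)) has_real_derivative
      plateau a d e x - plateau a d e (x - d) * (1 - 0)) (at x)"
    by (intro DERIV_diff plateau_primitive_has_derivative[OF assms]
        DERIV_chain2[OF plateau_primitive_has_derivative[OF assms]] DERIV_ident DERIV_const)
  then show ?thesis unfolding dipole_primitive_def[abs_def] dipole_def by simp
qed

lemma dipole_primitive_eq_0:
  assumes "e > 0" "2 * e \<le> d" "x \<le> a + e \<or> x \<ge> a + 2 * d - e"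
  shows "dipole_primitive a d e x = 0"
  using assms(3)
proof
  assume "x \<le> a + e"
  then show ?thesis
    using assms(1,2) by (simp add: dipole_primitive_def plateau_primitive_eq_0)
next
  assume x: "x \<ge> a + 2 * d - e"
  have const: "plateau_primitive a d e y = plateau_primitive a d e (a + d - e)" if "y \<ge> a + d - e" for y
    using assms that by (intro plateau_primitive_eq plateau_eq_0) auto
  show ?thesis
    unfolding dipole_primitive_def using const[of x] const[of "x - d"] x assms by simp
qed

lemma abs_dipole_primitive_le: "e > 0 \<Longrightarrow> 2 * e \<le> d \<Longrightarrow> \<bar>dipole_primitive a d e x\<bar> \<le> d"
  using plateau_primitive_bounds[of e d a x] plateau_primitive_bounds[of e d a "x - d"]
  by (simp add: dipole_primitive_def)

lemma abs_dipole_le: "\<bar>dipole a d e x\<bar> \<le> 1"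
  using plateau_bounds[of a d e x] plateau_bounds[of a d e "x - d"] by (simp add: dipole_def)

text \<open>test_fun encodes a test function by the sequence of its derivatives, so entry k + 1 is the
  k-th derivative of the dipole.\<close>
definition dipole_test :: "real \<Rightarrow> real \<Rightarrow> real \<Rightarrow> nat \<Rightarrow> real \<Rightarrow> real" where
  "dipole_test a d e k = (case k of 0 \<Rightarrow> dipole_primitive a d e | Suc j \<Rightarrow> (smooth_deriv ^^ j) (dipole a d e))"

lemma test_fun_dipole_test:
  assumes "e > 0" "4 * e \<le> d" "0 \<le> a" "a + 2 * d \<le> 1"
  shows "test_fun (dipole_test a d e)"
  unfolding test_fun_def
proof (intro conjI allI)
  fix k x
  show "(dipole_test a d e k has_real_derivative dipole_test a d e (Suc k) x) (at x)"
  proof (cases k)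
    case 0
    then show ?thesis using dipole_primitive_has_derivative[OF assms(1)] by (simp add: dipole_test_def)
  next
    case (Suc j)
    then show ?thesis
      using smooth_deriv_has_derivative[OF smooth_funpow_deriv[OF smooth_dipole[OF assms(1)]]]
      by (simp add: dipole_test_def)
  qed
next
  show "\<exists>a' b'. 0 < a' \<and> a' \<le> b' \<and> b' < 1 \<and> (\<forall>x. x \<notin> {a'..b'} \<longrightarrow> dipole_test a d e 0 x = 0)"
    using assms
    by (intro exI[of _ "a + e"] exI[of _ "a + 2 * d - e"])
       (auto simp: dipole_test_def intro!: dipole_primitive_eq_0)
qed

lemma integral_dipole_tendsto:
  fixes u :: "real \<Rightarrow> real"
  assumes um: "u \<in> borel_measurable borel" and ui: "integrable lborel (\<lambda>x. indicator {0<..<1} x * u x)"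
    and "0 \<le> a" "0 < d" "a + 2 * d \<le> 1"
  shows "(\<lambda>k. \<integral>x. indicator {0<..<1} x * (u x * dipole a d (d / (real k + 4)) x) \<partial>lborel)
    \<longlonglongrightarrow> (\<integral>x. indicator {a<..<a + d} x * u x \<partial>lborel) - (\<integral>x. indicator {a + d<..<a + 2 * d} x * u x \<partial>lborel)"
proof -
  define f where "f x = indicator {a<..<a + d} x * u x - indicator {a + d<..<a + 2 * d} x * u x" for x
  have sub: "{a<..<a + d} \<subseteq> {0<..<1}" "{a + d<..<a + 2 * d} \<subseteq> {0<..<1}"
    using assms by auto
  have "(\<lambda>k. \<integral>x. indicator {0<..<1} x * (u x * dipole a d (d / (real k + 4)) x) \<partial>lborel)
      \<longlonglongrightarrow> integral\<^sup>L lborel f"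
  proof (rule integral_dominated_convergence[where w="\<lambda>x. norm (indicator {0<..<1} x * u x)"])
    show "f \<in> borel_measurable lborel" unfolding f_def using um by measurable
    show "(\<lambda>x. indicator {0<..<1} x * (u x * dipole a d (d / (real k + 4)) x)) \<in> borel_measurable lborel" for k
    proof -
      have "d / (real k + 4) > 0" using assms by simp
      then have "dipole a d (d / (real k + 4)) \<in> borel_measurable borel"
        by (intro borel_measurable_continuous_onI smooth_continuous_on smooth_dipole)
      then show ?thesis using um by measurable
    qed
    show "integrable lborel (\<lambda>x. norm (indicator {0<..<1} x * u x))" using ui by simp
    show "AE x in lborel. norm (indicator {0<..<1} x * (u x * dipole a d (d / (real k + 4)) x))
        \<le> norm (indicator {0<..<1} x * u x)" for k
      using abs_dipole_le[of a d "d / (real k + 4)"]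
      by (intro AE_I2) (auto simp: abs_mult indicator_def intro: mult_left_le)
    show "AE x in lborel. (\<lambda>k. indicator {0<..<1} x * (u x * dipole a d (d / (real k + 4)) x)) \<longlonglongrightarrow> f x"
    proof (intro AE_I2)
      fix x
      have "(\<lambda>k. indicator {0<..<1} x * (u x * dipole a d (d / (real k + 4)) x))
          \<longlonglongrightarrow> indicator {0<..<1} x * (u x * (indicator {a<..<a + d} x - indicator {a<..<a + d} (x - d)))"
        unfolding dipole_def using assms by (intro tendsto_intros plateau_tendsto_indicator)
      moreover have "indicator {0<..<1} x * (u x * (indicator {a<..<a + d} x - indicator {a<..<a + d} (x - d))) = f x"
        using sub unfolding f_def by (auto simp: indicator_def)
      ultimately show "(\<lambda>k. indicator {0<..<1} x * (u x * dipole a d (d / (real k + 4)) x)) \<longlonglongrightarrow> f x"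
        by simp
    qed
  qed
  moreover have "integral\<^sup>L lborel f
      = (\<integral>x. indicator {a<..<a + d} x * u x \<partial>lborel) - (\<integral>x. indicator {a + d<..<a + 2 * d} x * u x \<partial>lborel)"
    unfolding f_def using sub
    by (intro Bochner_Integration.integral_diff integrable_indicator_mult_subset[OF ui um]) auto
  ultimately show ?thesis by simp
qed

lemma abs_integral_dipole_primitive_le:
  fixes u' :: "real \<Rightarrow> real"
  assumes u'm: "u' \<in> borel_measurable borel" and u'i: "integrable lborel (\<lambda>x. indicator {0<..<1} x * u' x)"
    and e: "e > 0" "2 * e \<le> d" and a: "0 \<le> a" "a + 2 * d \<le> 1"
  shows "\<bar>\<integral>x. indicator {0<..<1} x * (u' x * dipole_primitive a d e x) \<partial>lborel\<bar>
    \<le> d * (\<integral>x. indicator {a<..<a + 2 * d} x * \<bar>u' x\<bar> \<partial>lborel)"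
proof -
  have sub: "{a<..<a + 2 * d} \<subseteq> {0<..<1}" using a e by auto
  have bound: "\<bar>indicator {0<..<1} x * (u' x * dipole_primitive a d e x)\<bar>
      \<le> d * (indicator {a<..<a + 2 * d} x * \<bar>u' x\<bar>)" for x
  proof (cases "x \<in> {a<..<a + 2 * d}")
    case True
    have "\<bar>u' x\<bar> * \<bar>dipole_primitive a d e x\<bar> \<le> \<bar>u' x\<bar> * d"
      using abs_dipole_primitive_le[OF e, of a x] by (intro mult_left_mono) simp_all
    then show ?thesis using True sub by (auto simp: abs_mult mult.commute)
  next
    case False
    then have "dipole_primitive a d e x = 0" using e by (intro dipole_primitive_eq_0) auto
    then show ?thesis using False by simp
  qed
  have "continuous_on UNIV (dipole_primitive a d e)"
    by (rule DERIV_continuous_on[OF has_field_derivative_at_within[OF dipole_primitive_has_derivative[OF e(1)]]])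
  then have [measurable]: "dipole_primitive a d e \<in> borel_measurable borel"
    by (rule borel_measurable_continuous_onI)
  have "(\<lambda>x. \<bar>indicator {0<..<1} x * u' x\<bar>) = (\<lambda>x. indicator {0<..<1} x * \<bar>u' x\<bar>)"
    by (auto simp: indicator_def)
  then have "integrable lborel (\<lambda>x. indicator {0<..<1} x * \<bar>u' x\<bar>)"
    using integrable_abs[OF u'i] by simp
  moreover have "(\<lambda>x. \<bar>u' x\<bar>) \<in> borel_measurable borel" using u'm by measurable
  ultimately have "integrable lborel (\<lambda>x. indicator {a<..<a + 2 * d} x * \<bar>u' x\<bar>)"
    using sub by (rule integrable_indicator_mult_subset) simp
  then have int: "integrable lborel (\<lambda>x. d * (indicator {a<..<a + 2 * d} x * \<bar>u' x\<bar>))"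
    by simp
  have "\<bar>\<integral>x. indicator {0<..<1} x * (u' x * dipole_primitive a d e x) \<partial>lborel\<bar>
      \<le> (\<integral>x. d * (indicator {a<..<a + 2 * d} x * \<bar>u' x\<bar>) \<partial>lborel)"
  proof (rule integral_abs_bound_integral[OF _ int bound])
    show "integrable lborel (\<lambda>x. indicator {0<..<1} x * (u' x * dipole_primitive a d e x))"
    proof (rule Bochner_Integration.integrable_bound[OF int])
      show "(\<lambda>x. indicator {0<..<1} x * (u' x * dipole_primitive a d e x)) \<in> borel_measurable lborel"
        using u'm by measurable
      show "AE x in lborel. norm (indicator {0<..<1} x * (u' x * dipole_primitive a d e x))
          \<le> norm (d * (indicator {a<..<a + 2 * d} x * \<bar>u' x\<bar>))"
        using bound by (intro AE_I2) (metis abs_ge_self order_trans real_norm_def)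
    qed
  qed
  then show ?thesis by simp
qed

text \<open>Test the weak derivative with primitives of smoothed dipoles: their derivatives tend to
  1_(a,a+d) - 1_(a+d,a+2d), while they stay bounded by d.\<close>
lemma weak_deriv01_adjacent_integrals_diff:
  fixes u u' :: "real \<Rightarrow> real"
  assumes wd: "weak_deriv01 u u'"
    and um: "u \<in> borel_measurable borel" and ui: "integrable lborel (\<lambda>x. indicator {0<..<1} x * u x)"
    and u'm: "u' \<in> borel_measurable borel" and u'i: "integrable lborel (\<lambda>x. indicator {0<..<1} x * u' x)"
    and a: "0 \<le> a" "a + 2 * d \<le> 1" and d: "0 < d"
  shows "\<bar>(\<integral>x. indicator {a<..<a + d} x * u x \<partial>lborel) - (\<integral>x. indicator {a + d<..<a + 2 * d} x * u x \<partial>lborel)\<bar>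
    \<le> d * (\<integral>x. indicator {a<..<a + 2 * d} x * \<bar>u' x\<bar> \<partial>lborel)"
proof -
  have bound: "\<bar>\<integral>x. indicator {0<..<1} x * (u x * dipole a d (d / (real k + 4)) x) \<partial>lborel\<bar>
      \<le> d * (\<integral>x. indicator {a<..<a + 2 * d} x * \<bar>u' x\<bar> \<partial>lborel)" for k :: nat
  proof -
    define e where "e = d / (real k + 4)"
    have e: "e > 0" "4 * e \<le> d" using d by (auto simp: e_def field_simps)
    have "(\<integral>x. indicator {0<..<1} x * (u x * dipole a d e x) \<partial>lborel)
        = - (\<integral>x. indicator {0<..<1} x * (u' x * dipole_primitive a d e x) \<partial>lborel)"
      using wd test_fun_dipole_test[OF e a] unfolding weak_deriv01_def by (auto simp: dipole_test_def)
    then show ?thesis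
      using abs_integral_dipole_primitive_le[OF u'm u'i e(1) _ a] e by (simp add: e_def)
  qed
  show ?thesis
    by (rule LIMSEQ_le_const2[OF tendsto_rabs[OF integral_dipole_tendsto[OF um ui a(1) d a(2)]]])
       (use bound in auto)
qed

section \<open>Mollification\<close>

lemma bump_nonneg: "bump y \<ge> 0"
  by (simp add: bump_def)

lemma borel_measurable_bump[measurable]: "bump \<in> borel_measurable borel"
  unfolding bump_def by measurable

lemma stdJ_nonneg: "stdJ y \<ge> 0"
  unfolding stdJ_def by (intro divide_nonneg_nonneg bump_nonneg integral_nonneg_AE) (auto simp: bump_nonneg)

lemma borel_measurable_stdJ[measurable]: "stdJ \<in> borel_measurable borel"
  unfolding stdJ_def[abs_def] by measurable

lemma nn_integral_stdJ_le_1: "(\<integral>\<^sup>+ y. ennreal (stdJ y) \<partial>lborel) \<le> 1"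
proof (cases "integrable lborel bump \<and> (\<integral>z. bump z \<partial>lborel) \<noteq> 0")
  case False
  then show ?thesis by (auto simp: stdJ_def not_integrable_integral_eq)
next
  case True
  define c where "c = (\<integral>z. bump z \<partial>lborel)"
  have "c \<ge> 0" unfolding c_def by (intro integral_nonneg_AE) (auto simp: bump_nonneg)
  with True have c: "c > 0" by (simp add: c_def)
  have nn: "(\<integral>\<^sup>+ y. ennreal (bump y) \<partial>lborel) = ennreal c"
    unfolding c_def using True by (intro nn_integral_eq_integral) (auto simp: bump_nonneg)
  have "(\<integral>\<^sup>+ y. ennreal (stdJ y) \<partial>lborel) = (\<integral>\<^sup>+ y. ennreal (1 / c) * ennreal (bump y) \<partial>lborel)"
    unfolding stdJ_def c_def[symmetric] using c
    by (intro nn_integral_cong) (simp add: ennreal_mult'[symmetric] bump_nonneg)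
  also have "\<dots> = ennreal (1 / c) * ennreal c"
    by (subst nn_integral_cmult) (auto simp: nn)
  also have "\<dots> = 1" using c by (simp add: ennreal_mult'[symmetric])
  finally show ?thesis by simp
qed

lemma Jdelta_nonneg: "Jdelta \<delta> y \<ge> 0"
  unfolding Jdelta_def by (simp add: stdJ_nonneg)

lemma borel_measurable_Jdelta[measurable]: "Jdelta \<delta> \<in> borel_measurable borel"
  unfolding Jdelta_def[abs_def] by measurable

lemma nn_integral_Jdelta_le_1:
  assumes "\<delta> > 0"
  shows "(\<integral>\<^sup>+ y. ennreal (Jdelta \<delta> y) \<partial>lborel) \<le> 1"
proof -
  have "(\<lambda>y. ennreal (Jdelta \<delta> y)) \<in> borel_measurable borel" by measurable
  from nn_integral_lborel_affine[OF this, of \<delta> 0]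
  have "(\<integral>\<^sup>+ y. ennreal (Jdelta \<delta> y) \<partial>lborel) = (\<integral>\<^sup>+ x. ennreal (stdJ x) \<partial>lborel)"
    using assms by (auto intro!: nn_integral_cong simp: Jdelta_def ennreal_mult'[symmetric] power2_eq_square)
  then show ?thesis using nn_integral_stdJ_le_1 by simp
qed

lemma borel_measurable_rho_delta:
  assumes [measurable]: "p \<in> borel_measurable borel"
  shows "rho_delta T p \<delta> \<in> borel_measurable borel"
  unfolding rho_delta_def[abs_def] by measurable

lemma rho_delta_square_le:
  assumes "\<delta> > 0" and [measurable]: "p \<in> borel_measurable borel"
  shows "ennreal ((rho_delta T p \<delta> q)\<^sup>2)
    \<le> (\<integral>\<^sup>+ y. ennreal (Jdelta \<delta> (q - y) * (indicator (Qset T) y * p y)\<^sup>2) \<partial>lborel)"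
proof -
  have "(\<lambda>y. ennreal (Jdelta \<delta> y)) \<in> borel_measurable borel" by measurable
  from nn_integral_lborel_reflect[OF this, of q]
  have "(\<integral>\<^sup>+ y. ennreal (Jdelta \<delta> (q - y)) \<partial>lborel) \<le> ennreal 1"
    using nn_integral_Jdelta_le_1[OF assms(1)] by simp
  from weighted_square_integral_le[OF _ _ Jdelta_nonneg this]
  show ?thesis unfolding rho_delta_def by simp
qed

text \<open>Young's inequality for the convolution with a kernel of mass at most one.\<close>
lemma nn_integral_rho_delta_square_le:
  assumes "\<delta> > 0" and [measurable]: "p \<in> borel_measurable borel"
  shows "(\<integral>\<^sup>+ q. ennreal ((rho_delta T p \<delta> q)\<^sup>2) \<partial>lborel)
    \<le> (\<integral>\<^sup>+ y. ennreal ((indicator (Qset T) y * p y)\<^sup>2) \<partial>lborel)"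
proof -
  have "(\<integral>\<^sup>+ q. ennreal ((rho_delta T p \<delta> q)\<^sup>2) \<partial>lborel)
      \<le> (\<integral>\<^sup>+ q. (\<integral>\<^sup>+ y. ennreal (Jdelta \<delta> (q - y) * (indicator (Qset T) y * p y)\<^sup>2) \<partial>lborel) \<partial>lborel)"
    by (intro nn_integral_mono rho_delta_square_le assms)
  also have "\<dots> = (\<integral>\<^sup>+ y. (\<integral>\<^sup>+ q. ennreal (Jdelta \<delta> (q - y) * (indicator (Qset T) y * p y)\<^sup>2) \<partial>lborel) \<partial>lborel)"
    by (rule lborel_pair.Fubini'[symmetric]) measurable
  also have "\<dots> \<le> (\<integral>\<^sup>+ y. ennreal ((indicator (Qset T) y * p y)\<^sup>2) \<partial>lborel)"
  proof (intro nn_integral_mono)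
    fix y
    have "(\<lambda>y. ennreal (Jdelta \<delta> y)) \<in> borel_measurable borel" by measurable
    from nn_integral_lborel_translate[OF this, of y]
    have mass: "(\<integral>\<^sup>+ q. ennreal (Jdelta \<delta> (q - y)) \<partial>lborel) \<le> 1"
      using nn_integral_Jdelta_le_1[OF assms(1)] by simp
    have "(\<integral>\<^sup>+ q. ennreal (Jdelta \<delta> (q - y) * (indicator (Qset T) y * p y)\<^sup>2) \<partial>lborel)
        = (\<integral>\<^sup>+ q. ennreal (Jdelta \<delta> (q - y)) \<partial>lborel) * ennreal ((indicator (Qset T) y * p y)\<^sup>2)"
      by (subst nn_integral_multc[symmetric]) (auto intro!: nn_integral_cong simp: ennreal_mult Jdelta_nonneg)
    also have "\<dots> \<le> ennreal ((indicator (Qset T) y * p y)\<^sup>2)"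
      using mult_right_mono[OF mass] by simp
    finally show "(\<integral>\<^sup>+ q. ennreal (Jdelta \<delta> (q - y) * (indicator (Qset T) y * p y)\<^sup>2) \<partial>lborel)
        \<le> ennreal ((indicator (Qset T) y * p y)\<^sup>2)" .
  qed
  finally show ?thesis .
qed

lemma sum_by_parts:
  fixes z f :: "nat \<Rightarrow> real"
  assumes "n \<ge> 1"
  shows "(\<Sum>i=1..n. z i * (f i - f (i - 1))) = z n * f n - z 1 * f 0 - (\<Sum>i=1..n-1. f i * (z (i + 1) - z i))"
  using assms
proof (induction n rule: dec_induct)
  case (step m)
  have "(\<Sum>i=1..m. f i * (z (i + 1) - z i)) = (\<Sum>i=1..m-1. f i * (z (i + 1) - z i)) + f m * (z (m + 1) - z m)"
    using step.hyps by (cases m) auto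
  with step.IH show ?case by (simp add: algebra_simps)
qed (simp add: algebra_simps)

lemma sum_by_parts_vanishing:
  fixes z f :: "nat \<Rightarrow> real"
  assumes "n \<ge> 1" "f 0 = 0" "f n = 0"
  shows "(\<Sum>i=1..n. z i * (f i - f (i - 1))) = - (\<Sum>i=1..n-1. f i * (z (i + 1) - z i))"
  using sum_by_parts[OF assms(1), of z f] assms by simp

lemma MVT_derivative_bounds:
  assumes "\<And>u. (h has_real_derivative h' u) (at u)" and "\<And>u. lo \<le> h' u \<and> h' u \<le> hi" and "lo \<le> hi"
  shows "\<exists>m. lo \<le> m \<and> m \<le> hi \<and> h y - h x = m * (y - x)"
proof -
  consider "x < y" | "x = y" | "y < x" by linarith
  then show ?thesis
  proof cases
    case 1
    from MVT2[OF 1, of h h'] assms(1) obtain \<xi> where "h y - h x = (y - x) * h' \<xi>" by blast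
    then show ?thesis using assms(2)[of \<xi>] by (intro exI[of _ "h' \<xi>"]) simp
  next
    case 3
    from MVT2[OF 3, of h h'] assms(1) obtain \<xi> where "h x - h y = (x - y) * h' \<xi>" by blast
    then show ?thesis using assms(2)[of \<xi>] by (intro exI[of _ "h' \<xi>"]) (simp add: algebra_simps)
  qed (use assms(3) in auto)
qed

lemma weighted_mult_diff_ge:
  fixes m F \<beta> r lo hi C :: real
  assumes m: "lo \<le> m" "m \<le> hi" and "0 < lo" and "\<bar>\<beta>\<bar> \<le> C"
  shows "m * (F * (F - \<beta> * r)) \<ge> lo / 2 * F\<^sup>2 - hi * C\<^sup>2 / 2 * r\<^sup>2"
proof -
  define X where "X = F * (F - \<beta> * r)"
  have X: "X \<ge> F\<^sup>2 / 2 - \<beta>\<^sup>2 * r\<^sup>2 / 2"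
    using zero_le_power2[of "F - \<beta> * r"] unfolding X_def by (simp add: power2_eq_square algebra_simps)
  have \<beta>: "\<beta>\<^sup>2 \<le> C\<^sup>2" using assms(4) by (metis abs_ge_zero power2_abs power_mono)
  then have r: "\<beta>\<^sup>2 * r\<^sup>2 \<le> C\<^sup>2 * r\<^sup>2" by (simp add: mult_right_mono)
  show ?thesis
  proof (cases "X \<ge> 0")
    case True
    have "m * X \<ge> lo * X" using True m by (simp add: mult_right_mono)
    moreover have "lo * X \<ge> lo * (F\<^sup>2 / 2 - \<beta>\<^sup>2 * r\<^sup>2 / 2)" using X assms(3) by (simp add: mult_left_mono)
    moreover have "lo * (\<beta>\<^sup>2 * r\<^sup>2) \<le> hi * (C\<^sup>2 * r\<^sup>2)" using r \<beta> assms by (intro mult_mono) auto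
    ultimately show ?thesis unfolding X_def[symmetric] by (simp add: algebra_simps)
  next
    case False
    have "m * X \<ge> hi * X" using False m by (simp add: mult_right_mono_neg)
    moreover have "hi * X \<ge> hi * (F\<^sup>2 / 2 - \<beta>\<^sup>2 * r\<^sup>2 / 2)" using X assms by (simp add: mult_left_mono)
    moreover have "hi * F\<^sup>2 \<ge> lo * F\<^sup>2" using assms by (simp add: mult_right_mono)
    moreover have "hi * (\<beta>\<^sup>2 * r\<^sup>2) \<le> hi * (C\<^sup>2 * r\<^sup>2)" using r assms by (simp add: mult_left_mono)
    ultimately show ?thesis unfolding X_def[symmetric] by (simp add: algebra_simps)
  qed
qed

lemma abs_mult_le_AM_GM:
  fixes x y \<kappa> d :: real
  assumes "\<kappa> > 0" "d > 0"
  shows "\<bar>x\<bar> * y \<le> \<kappa> / 2 * d * x\<^sup>2 + y\<^sup>2 / (2 * \<kappa> * d)"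
proof -
  have "2 * (\<kappa> * d) * (\<bar>x\<bar> * y) \<le> (\<kappa> * d)\<^sup>2 * x\<^sup>2 + y\<^sup>2"
    using zero_le_power2[of "\<kappa> * d * \<bar>x\<bar> - y"] by (simp add: power2_eq_square algebra_simps)
  then show ?thesis using assms by (simp add: field_simps power2_eq_square)
qed

lemma le_two_sqrt_mult_if_AM_GM_bounds:
  fixes X K N :: real
  assumes bound: "\<And>\<kappa>. \<kappa> > 0 \<Longrightarrow> X \<le> \<kappa> / 2 * K + 2 / \<kappa> * N\<^sup>2" and K: "K > 0" and N: "N \<ge> 0"
  shows "X \<le> 2 * sqrt K * N"
proof (cases "N = 0")
  case True
  have "X \<le> \<epsilon>" if "\<epsilon> > 0" for \<epsilon>
    using bound[of "2 * \<epsilon> / K"] that K True by simp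
  then have "X \<le> 0" by (metis dense not_le)
  then show ?thesis using True by simp
next
  case False
  define \<kappa> where "\<kappa> = 2 * N / sqrt K"
  have "\<kappa> > 0" using False N K by (simp add: \<kappa>_def)
  have sK: "sqrt K > 0" "sqrt K * sqrt K = K" using K by auto
  have "\<kappa> / 2 * K = N * sqrt K" unfolding \<kappa>_def using sK by (simp add: field_simps)
  moreover have "2 / \<kappa> * N\<^sup>2 = N * sqrt K"
    unfolding \<kappa>_def using sK False by (simp add: field_simps power2_eq_square)
  ultimately show ?thesis using bound[OF \<open>\<kappa> > 0\<close>] by (simp add: mult_ac)
qed

lemma dx_pos: "n \<ge> 1 \<Longrightarrow> dx n > 0"
  by (simp add: dx_def)

lemma mem_cell_iff: "n \<ge> 1 \<Longrightarrow> x \<in> cell n i \<longleftrightarrow> real i - 1 \<le> x * n \<and> x * n < real i"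
  by (auto simp: cell_def dx_def field_simps)

lemma cell_unique:
  assumes "n \<ge> 1" "x \<in> cell n i" "x \<in> cell n j"
  shows "i = j"
proof -
  have "real i < real j + 1" "real j < real i + 1"
    using assms mem_cell_iff[OF assms(1)] by auto
  then show ?thesis by linarith
qed

lemma cell_subset:
  assumes n: "n \<ge> 1" and i: "i \<in> {1..n}"
  shows "cell n i \<subseteq> {0..<1}"
proof
  fix x assume "x \<in> cell n i"
  then have "real i - 1 \<le> x * n" "x * n < real i" using mem_cell_iff[OF n] by auto
  moreover have "real i \<le> real n" "1 \<le> real i" using i by auto
  ultimately have "0 \<le> x * n" "x * n < real n" by linarith+
  then show "x \<in> {0..<1}" using n by (auto simp: zero_le_mult_iff)
qed

lemma ex_cell:
  assumes n: "n \<ge> 1" and x: "x \<in> {0..<1}"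
  shows "\<exists>j\<in>{1..n}. x \<in> cell n j"
proof -
  define j where "j = nat \<lfloor>x * n\<rfloor> + 1"
  have "0 \<le> x * n" using x by simp
  then have f0: "\<lfloor>x * n\<rfloor> \<ge> 0" by simp
  then have j: "real j = real_of_int \<lfloor>x * n\<rfloor> + 1" unfolding j_def by simp
  have "x * n < real n" using x n by simp
  then have "\<lfloor>x * n\<rfloor> < int n" by (simp add: floor_less_iff)
  then have "nat \<lfloor>x * n\<rfloor> < n" using f0 by (simp add: nat_less_iff)
  then have "j \<le> n" unfolding j_def by linarith
  moreover have "real_of_int \<lfloor>x * n\<rfloor> \<le> x * n" "x * n < real_of_int \<lfloor>x * n\<rfloor> + 1"
    by linarith+
  then have "x \<in> cell n j" using mem_cell_iff[OF n] j by simp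
  ultimately show ?thesis using j_def by auto
qed

lemma sets_cell[measurable]: "cell n i \<in> sets borel"
  by (simp add: cell_def)

lemma emeasure_cell: "n \<ge> 1 \<Longrightarrow> emeasure lborel (cell n i) = ennreal (dx n)"
  using dx_pos[of n] by (simp add: cell_def algebra_simps)

lemma sum_indicator_cell_le:
  assumes n: "n \<ge> 1" and S: "S \<subseteq> {1..n}"
  shows "(\<Sum>i\<in>S. indicator (cell n i) x) \<le> (indicator {0..<1} x :: real)"
proof (cases "\<exists>i\<in>S. x \<in> cell n i")
  case True
  then obtain i where i: "i \<in> S" "x \<in> cell n i" by blast
  have "finite S" using S finite_subset by blast
  then have "(\<Sum>i\<in>S. indicator (cell n i) x) = indicator (cell n i) x + (\<Sum>j\<in>S - {i}. indicator (cell n j) x)"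
    using i by (simp add: sum.remove)
  also have "(\<Sum>j\<in>S - {i}. indicator (cell n j) x) = (0::real)"
    using cell_unique[OF n i(2)] by (intro sum.neutral) (auto simp: indicator_def)
  finally have "(\<Sum>i\<in>S. indicator (cell n i) x) = (1::real)" using i by simp
  moreover have "i \<in> {1..n}" using i S by auto
  then have "x \<in> {0..<1}" using cell_subset[OF n] i(2) by blast
  ultimately show ?thesis by simp
next
  case False
  then have "(\<Sum>i\<in>S. indicator (cell n i) x) = (0::real)" by (intro sum.neutral) auto
  then show ?thesis by simp
qed

lemma sum_indicator_double_cell_le:
  assumes n: "n \<ge> 1"
  shows "(\<Sum>j=1..n-1. indicator {(real j - 1) * dx n<..<(real j - 1) * dx n + 2 * dx n} x)
    \<le> (2 * indicator {0<..<1} x :: real)"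
proof (cases "x \<in> {0<..<1}")
  case False
  have "indicator {(real j - 1) * dx n<..<(real j - 1) * dx n + 2 * dx n} x = (0::real)" if "j \<in> {1..n-1}" for j
  proof -
    have "(real j - 1) * dx n \<ge> 0" "(real j - 1) * dx n + 2 * dx n \<le> 1"
      using that n by (auto simp: dx_def field_simps)
    then show ?thesis using False by (auto simp: indicator_def)
  qed
  then show ?thesis by simp
next
  case True
  have "(\<Sum>j=1..n-1. indicator {(real j - 1) * dx n<..<(real j - 1) * dx n + 2 * dx n} x)
      \<le> (\<Sum>j=1..n-1. indicator (cell n j) x + (indicator (cell n (Suc j)) x :: real))"
    by (intro sum_mono) (auto simp: indicator_def cell_def algebra_simps)
  also have "\<dots> = (\<Sum>j=1..n-1. indicator (cell n j) x) + (\<Sum>j\<in>Suc ` {1..n-1}. indicator (cell n j) x)"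
    by (subst sum.reindex) (auto simp: sum.distrib)
  also have "\<dots> \<le> indicator {0..<1} x + indicator {0..<1} x"
    using n by (intro add_mono sum_indicator_cell_le) auto
  finally show ?thesis using True by (simp add: indicator_def)
qed

lemma cell_avg_square_le:
  assumes n: "n \<ge> 1" and "g \<in> borel_measurable borel"
  shows "ennreal (dx n * (cell_avg n g i)\<^sup>2) \<le> (\<integral>\<^sup>+ x. ennreal (indicator (cell n i) x * (g x)\<^sup>2) \<partial>lborel)"
proof -
  have D: "dx n > 0" using dx_pos[OF n] .
  have "(\<integral>\<^sup>+ x. ennreal (indicator (cell n i) x) \<partial>lborel) \<le> ennreal (dx n)"
    by (simp add: ennreal_indicator emeasure_cell[OF n])
  from weighted_square_integral_le[OF _ assms(2) _ this]
  have CS: "ennreal ((\<integral>x. indicator (cell n i) x * g x \<partial>lborel)\<^sup>2)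
      \<le> ennreal (dx n) * (\<integral>\<^sup>+ x. ennreal (indicator (cell n i) x * (g x)\<^sup>2) \<partial>lborel)"
    by simp
  have "ennreal (dx n * (cell_avg n g i)\<^sup>2)
      = ennreal (1 / dx n) * ennreal ((\<integral>x. indicator (cell n i) x * g x \<partial>lborel)\<^sup>2)"
    using D by (simp add: cell_avg_def power2_eq_square ennreal_mult[symmetric])
  also have "\<dots> \<le> ennreal (1 / dx n) * (ennreal (dx n) * (\<integral>\<^sup>+ x. ennreal (indicator (cell n i) x * (g x)\<^sup>2) \<partial>lborel))"
    by (rule mult_left_mono[OF CS]) simp
  also have "\<dots> = (\<integral>\<^sup>+ x. ennreal (indicator (cell n i) x * (g x)\<^sup>2) \<partial>lborel)"
    using D by (simp add: ennreal_mult[symmetric] mult.assoc[symmetric])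
  finally show ?thesis .
qed

lemma sum_cell_avg_square_le:
  assumes n: "n \<ge> 1" and [measurable]: "g \<in> borel_measurable borel" and S: "S \<subseteq> {1..n}"
  shows "ennreal (\<Sum>i\<in>S. dx n * (cell_avg n g i)\<^sup>2) \<le> (\<integral>\<^sup>+ x. ennreal (indicator {0..<1} x * (g x)\<^sup>2) \<partial>lborel)"
proof -
  have "ennreal (\<Sum>i\<in>S. dx n * (cell_avg n g i)\<^sup>2) = (\<Sum>i\<in>S. ennreal (dx n * (cell_avg n g i)\<^sup>2))"
    using dx_pos[OF n] by (intro sum_ennreal[symmetric]) simp
  also have "\<dots> \<le> (\<Sum>i\<in>S. (\<integral>\<^sup>+ x. ennreal (indicator (cell n i) x * (g x)\<^sup>2) \<partial>lborel))"
    by (intro sum_mono cell_avg_square_le n) measurable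
  also have "\<dots> = (\<integral>\<^sup>+ x. (\<Sum>i\<in>S. ennreal (indicator (cell n i) x * (g x)\<^sup>2)) \<partial>lborel)"
    by (intro nn_integral_sum[symmetric]) measurable
  also have "\<dots> \<le> (\<integral>\<^sup>+ x. ennreal (indicator {0..<1} x * (g x)\<^sup>2) \<partial>lborel)"
  proof (intro nn_integral_mono)
    fix x
    have "(\<Sum>i\<in>S. indicator (cell n i) x * (g x)\<^sup>2) = (\<Sum>i\<in>S. indicator (cell n i) x) * (g x)\<^sup>2"
      by (simp add: sum_distrib_right)
    also have "\<dots> \<le> indicator {0..<1} x * (g x)\<^sup>2"
      by (intro mult_right_mono sum_indicator_cell_le n S) simp
    finally show "(\<Sum>i\<in>S. ennreal (indicator (cell n i) x * (g x)\<^sup>2)) \<le> ennreal (indicator {0..<1} x * (g x)\<^sup>2)"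
      by (simp add: sum_ennreal ennreal_leI)
  qed
  finally show ?thesis .
qed

lemma vpc_eq_cell:
  assumes "n \<ge> 1" "x \<in> cell n j" "j \<in> {1..n}"
  shows "vpc n v s x = v j s"
proof -
  have "vpc n v s x = indicator (cell n j) x * v j s + (\<Sum>i\<in>{1..n} - {j}. indicator (cell n i) x * v i s)"
    unfolding vpc_def by (rule sum.remove) (use assms(3) in auto)
  also have "(\<Sum>i\<in>{1..n} - {j}. indicator (cell n i) x * v i s) = 0"
    using cell_unique[OF assms(1,2)] by (intro sum.neutral) (auto simp: indicator_def)
  finally show ?thesis using assms(2) by simp
qed

lemma integral_cell_eq_interval:
  fixes u :: "real \<Rightarrow> real"
  assumes n: "n \<ge> 1" and j: "j \<in> {1..n}" and [measurable]: "u \<in> borel_measurable borel"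
  shows "(\<integral>x. indicator (cell n j) x * (indicator {0<..<1} x * u x) \<partial>lborel)
    = (\<integral>x. indicator {(real j - 1) * dx n<..<(real j - 1) * dx n + dx n} x * u x \<partial>lborel)"
proof (rule integral_cong_AE)
  have bounds: "(real j - 1) * dx n \<ge> 0" "(real j - 1) * dx n + dx n \<le> 1"
    using j n by (auto simp: dx_def field_simps)
  show "AE x in lborel. indicator (cell n j) x * (indicator {0<..<1} x * u x)
      = indicator {(real j - 1) * dx n<..<(real j - 1) * dx n + dx n} x * u x"
    using AE_lborel_singleton[of "(real j - 1) * dx n"]
    by eventually_elim (use bounds in \<open>auto simp: indicator_def cell_def algebra_simps\<close>)
qed measurable

lemma sum_square_double_cell_integrals_le:
  fixes u' :: "real \<Rightarrow> real"
  assumes n: "n \<ge> 1" and [measurable]: "u' \<in> borel_measurable borel"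
    and int: "integrable lborel (\<lambda>x. indicator {0<..<1} x * (u' x)\<^sup>2)"
  shows "(\<Sum>j=1..n-1. (\<integral>x. indicator {(real j - 1) * dx n<..<(real j - 1) * dx n + 2 * dx n} x * \<bar>u' x\<bar> \<partial>lborel)\<^sup>2)
    \<le> 4 * dx n * (\<integral>x. indicator {0<..<1} x * (u' x)\<^sup>2 \<partial>lborel)"
proof -
  define I where "I j = {(real j - 1) * dx n<..<(real j - 1) * dx n + 2 * dx n}" for j
  have D: "dx n > 0" using dx_pos[OF n] .
  have "I j \<subseteq> {0<..<1}" if "j \<in> {1..n-1}" for j
  proof -
    have "(real j - 1) * dx n \<ge> 0" "(real j - 1) * dx n + 2 * dx n \<le> 1"
      using that n by (auto simp: dx_def field_simps)
    then show ?thesis by (auto simp: I_def)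
  qed
  then have int_j: "integrable lborel (\<lambda>x. indicator (I j) x * (u' x)\<^sup>2)" if "j \<in> {1..n-1}" for j
    using that by (intro integrable_indicator_mult_subset[OF int]) (auto simp: I_def)
  have "(\<integral>x. indicator (I j) x * \<bar>u' x\<bar> \<partial>lborel)\<^sup>2 \<le> 2 * dx n * (\<integral>x. indicator (I j) x * (u' x)\<^sup>2 \<partial>lborel)"
    if "j \<in> {1..n-1}" for j
    using square_integral_interval_abs_le[of u' "2 * dx n"] D int_j[OF that] unfolding I_def by simp
  then have "(\<Sum>j=1..n-1. (\<integral>x. indicator (I j) x * \<bar>u' x\<bar> \<partial>lborel)\<^sup>2)
      \<le> 2 * dx n * (\<Sum>j=1..n-1. \<integral>x. indicator (I j) x * (u' x)\<^sup>2 \<partial>lborel)"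
    unfolding sum_distrib_left by (rule sum_mono)
  also have "(\<Sum>j=1..n-1. \<integral>x. indicator (I j) x * (u' x)\<^sup>2 \<partial>lborel)
      = (\<integral>x. (\<Sum>j=1..n-1. indicator (I j) x * (u' x)\<^sup>2) \<partial>lborel)"
    by (rule Bochner_Integration.integral_sum[symmetric]) (rule int_j)
  also have "\<dots> \<le> (\<integral>x. 2 * (indicator {0<..<1} x * (u' x)\<^sup>2) \<partial>lborel)"
  proof (rule integral_mono)
    show "integrable lborel (\<lambda>x. \<Sum>j=1..n-1. indicator (I j) x * (u' x)\<^sup>2)"
      by (rule Bochner_Integration.integrable_sum) (rule int_j)
    show "(\<Sum>j=1..n-1. indicator (I j) x * (u' x)\<^sup>2) \<le> 2 * (indicator {0<..<1} x * (u' x)\<^sup>2)" for x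
      using mult_right_mono[OF sum_indicator_double_cell_le[OF n, of x] zero_le_power2[of "u' x"]]
      unfolding I_def sum_distrib_right[symmetric] by simp
  qed (use int in simp)
  finally show ?thesis using D by (simp add: I_def)
qed

section \<open>The energy estimate\<close>

locale scheme_solution =
  fixes T \<delta>h Ch \<delta>b Cb :: real and h h' b :: "real \<Rightarrow> real" and p :: "real \<times> real \<Rightarrow> real"
    and v0 :: "real \<Rightarrow> real" and n :: nat and \<delta> :: real and v vd :: "nat \<Rightarrow> real \<Rightarrow> real"
  assumes T: "T > 0" and n: "n \<ge> 1" and \<delta>: "\<delta> > 0"
    and h_deriv: "\<And>u. (h has_real_derivative h' u) (at u)"
    and h'_cont: "continuous_on UNIV h'"
    and h'_bounds: "\<And>u. \<delta>h \<le> h' u \<and> h' u \<le> Ch" and \<delta>h: "\<delta>h > 0"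
    and b_cont: "continuous_on UNIV b"
    and b_bounds: "\<And>u. \<delta>b \<le> b u \<and> b u \<le> Cb" and \<delta>b: "\<delta>b > 0"
    and p_meas[measurable]: "p \<in> borel_measurable borel"
    and p_square: "set_integrable lborel (Qset T) (\<lambda>q. (p q)\<^sup>2)"
    and v0_meas[measurable]: "v0 \<in> borel_measurable borel"
    and v0_square: "set_integrable lborel {0<..<1} (\<lambda>x. (v0 x)\<^sup>2)"
    and sol: "is_scheme_solution T h' b p v0 n \<delta> v vd"
begin

abbreviation "\<Delta> \<equiv> dx n"

definition "rho_avg i t = cell_avg n (\<lambda>\<xi>. rho_delta T p \<delta> (t, \<xi>)) i"

definition "a i t = flux b n v rho_avg i t"

definition "z i t = h (v i t)"

definition "energy t = (\<Sum>i=1..n. \<Delta> * (z i t)\<^sup>2 / 2)"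

definition "flux_norm2 t = (\<Sum>i=1..n-1. \<Delta> * (a i t)\<^sup>2)"

definition "rho_norm2 t = (\<Sum>i=1..n-1. \<Delta> * (rho_avg i t)\<^sup>2)"

lemma \<Delta>_pos: "\<Delta> > 0"
  using dx_pos[OF n] .

lemma
  assumes "i \<in> {1..n}"
  shows v_has_derivative: "t \<in> {0..T} \<Longrightarrow> (v i has_real_derivative vd i t) (at t within {0..T})"
    and continuous_on_vd: "continuous_on {0..T} (vd i)"
    and v_initial: "v i 0 = cell_avg n v0 i"
    and scheme_eq: "t \<in> {0..T} \<Longrightarrow> h' (v i t) * vd i t = (a i t - a (i - 1) t) / \<Delta>"
  using sol assms unfolding is_scheme_solution_def Let_def a_def rho_avg_def[abs_def] by auto

lemma a_0: "a 0 t = 0"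
  by (simp add: a_def flux_def)

lemma a_eq_0: "j \<ge> n \<Longrightarrow> a j t = 0"
  using n by (simp add: a_def flux_def)

lemma a_inner: "1 \<le> j \<Longrightarrow> j \<le> n - 1 \<Longrightarrow>
    a j t = (v (j + 1) t - v j t) / \<Delta> + b ((v j t + v (j + 1) t) / 2) * rho_avg j t"
  by (simp add: a_def flux_def)

lemma a_eq_sum: "t \<in> {0..T} \<Longrightarrow> j \<le> n \<Longrightarrow> a j t = (\<Sum>i=1..j. \<Delta> * (h' (v i t) * vd i t))"
proof (induction j)
  case (Suc j)
  then have "a (Suc j) t = a j t + \<Delta> * (h' (v (Suc j) t) * vd (Suc j) t)"
    using scheme_eq[of "Suc j" t] \<Delta>_pos by (simp add: field_simps)
  then show ?case using Suc by simp
qed (simp add: a_0)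

lemma continuous_on_v: "i \<in> {1..n} \<Longrightarrow> continuous_on {0..T} (v i)"
  by (rule DERIV_continuous_on[OF v_has_derivative])

lemma continuous_on_a: "continuous_on {0..T} (a j)"
proof (cases "j \<le> n")
  case True
  have cont: "continuous_on {0..T} (\<lambda>t. \<Sum>i=1..j. \<Delta> * (h' (v i t) * vd i t))"
    using True
    by (intro continuous_on_sum continuous_on_mult continuous_on_const continuous_on_vd
        continuous_on_compose2[OF h'_cont continuous_on_v]) auto
  have eq: "a j t = (\<Sum>i=1..j. \<Delta> * (h' (v i t) * vd i t))" if "t \<in> {0..T}" for t
    using that True by (rule a_eq_sum)
  show ?thesis
    using cont by (rule continuous_on_eq) (rule eq[symmetric])
next
  case False
  then show ?thesis using a_eq_0[of j] by simp
qed

lemma continuous_on_rho_avg: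
  assumes "1 \<le> j" "j \<le> n - 1"
  shows "continuous_on {0..T} (rho_avg j)"
proof -
  have j: "j \<in> {1..n}" "j + 1 \<in> {1..n}" using assms n by auto
  have b_nz: "b ((v j t + v (j + 1) t) / 2) \<noteq> 0" for t
    using b_bounds[of "(v j t + v (j + 1) t) / 2"] \<delta>b by linarith
  then have "rho_avg j t = (a j t - (v (j + 1) t - v j t) / \<Delta>) / b ((v j t + v (j + 1) t) / 2)" for t
    using a_inner[OF assms, of t] by (simp add: field_simps)
  moreover have "continuous_on {0..T} (\<lambda>t. (a j t - (v (j + 1) t - v j t) / \<Delta>) / b ((v j t + v (j + 1) t) / 2))"
    using b_nz \<Delta>_pos
    by (intro continuous_on_divide continuous_on_diff continuous_on_a continuous_on_v j continuous_on_const
        continuous_on_compose2[OF b_cont] continuous_on_add) auto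
  ultimately show ?thesis by simp
qed

lemma continuous_on_flux_norm2: "continuous_on {0..T} flux_norm2"
  unfolding flux_norm2_def[abs_def]
  by (intro continuous_on_sum continuous_on_mult continuous_on_const continuous_on_power continuous_on_a)

lemma continuous_on_rho_norm2: "continuous_on {0..T} rho_norm2"
  unfolding rho_norm2_def[abs_def]
  by (intro continuous_on_sum continuous_on_mult continuous_on_const continuous_on_power continuous_on_rho_avg) auto

lemma flux_norm2_nonneg: "flux_norm2 t \<ge> 0"
  unfolding flux_norm2_def using \<Delta>_pos by (intro sum_nonneg) simp

lemma rho_norm2_nonneg: "rho_norm2 t \<ge> 0"
  unfolding rho_norm2_def using \<Delta>_pos by (intro sum_nonneg) simp

lemma energy_nonneg: "energy t \<ge> 0"
  unfolding energy_def using \<Delta>_pos by (intro sum_nonneg) simp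

lemma energy_has_derivative:
  assumes t: "t \<in> {0..T}"
  shows "(energy has_real_derivative - (\<Sum>i=1..n-1. a i t * (z (i + 1) t - z i t))) (at t within {0..T})"
proof -
  have "(energy has_real_derivative (\<Sum>i=1..n. z i t * (a i t - a (i - 1) t))) (at t within {0..T})"
    unfolding energy_def[abs_def]
  proof (rule DERIV_sum)
    fix i assume i: "i \<in> {1..n}"
    have deriv: "((\<lambda>t. \<Delta> * (h (v i t))\<^sup>2 / 2) has_real_derivative
        \<Delta> * (2 * (h' (v i t) * vd i t * h (v i t))) / 2) (at t within {0..T})"
      using DERIV_power[OF DERIV_chain2[OF h_deriv v_has_derivative[OF i t]], of 2]
      by (intro DERIV_cdivide DERIV_cmult) simp
    have a_diff: "a i t - a (i - 1) t = \<Delta> * (h' (v i t) * vd i t)"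
      using scheme_eq[OF i t] \<Delta>_pos by (simp add: field_simps)
    have "\<Delta> * (2 * (h' (v i t) * vd i t * h (v i t))) / 2 = z i t * (a i t - a (i - 1) t)"
      unfolding a_diff z_def by (simp add: algebra_simps)
    with deriv show "((\<lambda>t. \<Delta> * (z i t)\<^sup>2 / 2) has_real_derivative z i t * (a i t - a (i - 1) t)) (at t within {0..T})"
      by (simp add: z_def)
  qed
  moreover have "(\<Sum>i=1..n. z i t * (a i t - a (i - 1) t)) = - (\<Sum>i=1..n-1. a i t * (z (i + 1) t - z i t))"
    using sum_by_parts_vanishing[OF n, where z="\<lambda>i. z i t" and f="\<lambda>i. a i t"] a_0 a_eq_0 by simp
  ultimately show ?thesis by simp
qed

text \<open>By the mean value theorem and the scheme, a_i (h(v_(i+1)) - h(v_i)) = dx h'(xi) a_i (a_i - b rho_i),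
  and h'(xi) lies between delta_h and C_h.\<close>
lemma energy_dissipation:
  "\<delta>h / 2 * flux_norm2 t - Ch * Cb\<^sup>2 / 2 * rho_norm2 t \<le> (\<Sum>i=1..n-1. a i t * (z (i + 1) t - z i t))"
proof -
  have each: "\<Delta> * (\<delta>h / 2 * (a i t)\<^sup>2 - Ch * Cb\<^sup>2 / 2 * (rho_avg i t)\<^sup>2) \<le> a i t * (z (i + 1) t - z i t)"
    if i: "i \<in> {1..n-1}" for i
  proof -
    define \<beta> where "\<beta> = b ((v i t + v (i + 1) t) / 2)"
    have "\<delta>h \<le> Ch" using h'_bounds[of 0] by linarith
    then obtain m where m: "\<delta>h \<le> m" "m \<le> Ch" "h (v (i + 1) t) - h (v i t) = m * (v (i + 1) t - v i t)"
      using MVT_derivative_bounds[OF h_deriv h'_bounds] by blast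
    have v_diff: "v (i + 1) t - v i t = \<Delta> * (a i t - \<beta> * rho_avg i t)"
      using a_inner[of i t] i \<Delta>_pos unfolding \<beta>_def by (simp add: field_simps)
    have eq: "a i t * (z (i + 1) t - z i t) = \<Delta> * (m * (a i t * (a i t - \<beta> * rho_avg i t)))"
      unfolding z_def m(3) v_diff by (simp add: algebra_simps)
    have "\<bar>\<beta>\<bar> \<le> Cb" using b_bounds[of "(v i t + v (i + 1) t) / 2"] \<delta>b unfolding \<beta>_def by auto
    then have "\<delta>h / 2 * (a i t)\<^sup>2 - Ch * Cb\<^sup>2 / 2 * (rho_avg i t)\<^sup>2 \<le> m * (a i t * (a i t - \<beta> * rho_avg i t))"
      by (rule weighted_mult_diff_ge[OF m(1,2) \<delta>h])
    then show ?thesis unfolding eq by (rule mult_left_mono) (use \<Delta>_pos in simp)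
  qed
  have "\<delta>h / 2 * flux_norm2 t - Ch * Cb\<^sup>2 / 2 * rho_norm2 t
      = (\<Sum>i=1..n-1. \<Delta> * (\<delta>h / 2 * (a i t)\<^sup>2 - Ch * Cb\<^sup>2 / 2 * (rho_avg i t)\<^sup>2))"
    unfolding flux_norm2_def rho_norm2_def by (simp add: sum_distrib_left sum_subtractf algebra_simps)
  also have "\<dots> \<le> (\<Sum>i=1..n-1. a i t * (z (i + 1) t - z i t))"
    by (rule sum_mono) (rule each)
  finally show ?thesis .
qed

lemma integral_flux_norm2_le_energy:
  "\<delta>h / 2 * integral {0..T} flux_norm2 \<le> energy 0 + Ch * Cb\<^sup>2 / 2 * integral {0..T} rho_norm2"
proof -
  define S where "S t = (\<Sum>i=1..n-1. a i t * (z (i + 1) t - z i t))" for t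
  have ftc: "((\<lambda>t. - S t) has_integral (energy T - energy 0)) {0..T}"
  proof (rule fundamental_theorem_of_calculus)
    show "(energy has_vector_derivative - S t) (at t within {0..T})" if "t \<in> {0..T}" for t
      using energy_has_derivative[OF that] unfolding has_real_derivative_iff_has_vector_derivative S_def .
  qed (use T in simp)
  have "((\<lambda>t. \<delta>h / 2 * flux_norm2 t) has_integral \<delta>h / 2 * integral {0..T} flux_norm2) {0..T}"
    by (intro has_integral_mult_right integrable_integral integrable_continuous_interval continuous_on_flux_norm2)
  moreover have "((\<lambda>t. - (- S t) + Ch * Cb\<^sup>2 / 2 * rho_norm2 t) has_integral
      - (energy T - energy 0) + Ch * Cb\<^sup>2 / 2 * integral {0..T} rho_norm2) {0..T}"
    by (intro has_integral_add has_integral_neg ftc has_integral_mult_right integrable_integral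
        integrable_continuous_interval continuous_on_rho_norm2)
  moreover have "\<delta>h / 2 * flux_norm2 t \<le> - (- S t) + Ch * Cb\<^sup>2 / 2 * rho_norm2 t" for t
    using energy_dissipation[of t] unfolding S_def by simp
  ultimately have "\<delta>h / 2 * integral {0..T} flux_norm2
      \<le> - (energy T - energy 0) + Ch * Cb\<^sup>2 / 2 * integral {0..T} rho_norm2"
    by (rule has_integral_le)
  then show ?thesis using energy_nonneg[of T] by simp
qed

lemma integral_rho_norm2_le: "integral {0..T} rho_norm2 \<le> (\<integral>q. indicator (Qset T) q * (p q)\<^sup>2 \<partial>lborel)"
proof -
  have "ennreal (integral {0..T} rho_norm2) = (\<integral>\<^sup>+ t. ennreal (indicator {0..T} t * rho_norm2 t) \<partial>lborel)"
    using continuous_on_rho_norm2 rho_norm2_nonneg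
    by (intro nn_integral_has_integral_lebesgue[symmetric] integrable_integral integrable_continuous_interval) auto
  also have "\<dots> \<le> (\<integral>\<^sup>+ t. (\<integral>\<^sup>+ \<xi>. ennreal ((rho_delta T p \<delta> (t, \<xi>))\<^sup>2) \<partial>lborel) \<partial>lborel)"
  proof (intro nn_integral_mono)
    fix t
    have [measurable]: "rho_delta T p \<delta> \<in> borel_measurable borel"
      by (rule borel_measurable_rho_delta[OF p_meas])
    have "ennreal (rho_norm2 t) \<le> (\<integral>\<^sup>+ x. ennreal (indicator {0..<1} x * (rho_delta T p \<delta> (t, x))\<^sup>2) \<partial>lborel)"
      unfolding rho_norm2_def rho_avg_def using n by (intro sum_cell_avg_square_le) auto
    also have "\<dots> \<le> (\<integral>\<^sup>+ \<xi>. ennreal ((rho_delta T p \<delta> (t, \<xi>))\<^sup>2) \<partial>lborel)"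
      by (intro nn_integral_mono ennreal_leI) (auto simp: indicator_def)
    finally show "ennreal (indicator {0..T} t * rho_norm2 t) \<le> (\<integral>\<^sup>+ \<xi>. ennreal ((rho_delta T p \<delta> (t, \<xi>))\<^sup>2) \<partial>lborel)"
      by (cases "t \<in> {0..T}") auto
  qed
  also have "\<dots> = (\<integral>\<^sup>+ q. ennreal ((rho_delta T p \<delta> q)\<^sup>2) \<partial>lborel)"
    using borel_measurable_rho_delta[OF p_meas] by (intro nn_integral_lborel_iterated) measurable
  also have "\<dots> \<le> (\<integral>\<^sup>+ y. ennreal ((indicator (Qset T) y * p y)\<^sup>2) \<partial>lborel)"
    by (rule nn_integral_rho_delta_square_le[OF \<delta> p_meas])
  also have "\<dots> = ennreal (\<integral>q. indicator (Qset T) q * (p q)\<^sup>2 \<partial>lborel)"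
  proof -
    have "(indicator (Qset T) y * p y)\<^sup>2 = indicator (Qset T) y * (p y)\<^sup>2" for y
      by (simp add: indicator_def)
    then show ?thesis using nn_integral_indicator_square_eq[OF p_square] by simp
  qed
  finally show ?thesis
    using integral_indicator_square_nonneg by (simp add: ennreal_le_iff)
qed

lemma h_square_le: "(h u)\<^sup>2 \<le> 2 * (h 0)\<^sup>2 + 2 * Ch\<^sup>2 * u\<^sup>2"
proof -
  have "\<delta>h \<le> Ch" using h'_bounds[of 0] by linarith
  then obtain m where m: "\<delta>h \<le> m" "m \<le> Ch" "h u - h 0 = m * (u - 0)"
    using MVT_derivative_bounds[OF h_deriv h'_bounds] by blast
  have hu: "h u = h 0 + m * u" using m(3) by simp
  have "(h 0 + m * u)\<^sup>2 \<le> 2 * (h 0)\<^sup>2 + 2 * (m * u)\<^sup>2"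
    using zero_le_power2[of "h 0 - m * u"] by (simp add: power2_eq_square algebra_simps)
  moreover have "(m * u)\<^sup>2 \<le> Ch\<^sup>2 * u\<^sup>2"
    using m \<delta>h by (simp add: power_mult_distrib mult_right_mono power_mono)
  ultimately show ?thesis unfolding hu by linarith
qed

lemma energy_0_le: "energy 0 \<le> (h 0)\<^sup>2 + Ch\<^sup>2 * (\<integral>x. indicator {0<..<1} x * (v0 x)\<^sup>2 \<partial>lborel)"
proof -
  define V2 where "V2 = (\<integral>x. indicator {0<..<1} x * (v0 x)\<^sup>2 \<partial>lborel)"
  define u where "u i = cell_avg n v0 i" for i
  have "(\<integral>\<^sup>+ x. ennreal (indicator {0..<1} x * (v0 x)\<^sup>2) \<partial>lborel)
      = (\<integral>\<^sup>+ x. ennreal (indicator {0<..<1} x * (v0 x)\<^sup>2) \<partial>lborel)"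
    using AE_lborel_singleton[of 0] by (intro nn_integral_cong_AE) (auto simp: indicator_def)
  also have "\<dots> = ennreal V2"
    unfolding V2_def by (rule nn_integral_indicator_square_eq[OF v0_square])
  finally have "ennreal (\<Sum>i=1..n. \<Delta> * (u i)\<^sup>2) \<le> ennreal V2"
    using sum_cell_avg_square_le[OF n v0_meas, of "{1..n}"] unfolding u_def by simp
  then have V2: "(\<Sum>i=1..n. \<Delta> * (u i)\<^sup>2) \<le> V2"
    using integral_indicator_square_nonneg by (simp add: V2_def ennreal_le_iff)
  have "energy 0 = (\<Sum>i=1..n. \<Delta> * (h (u i))\<^sup>2 / 2)"
    unfolding energy_def z_def u_def by (intro sum.cong refl) (simp add: v_initial)
  also have "\<dots> \<le> (\<Sum>i=1..n. \<Delta> * ((h 0)\<^sup>2 + Ch\<^sup>2 * (u i)\<^sup>2))"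
  proof (rule sum_mono)
    fix i
    have "(h (u i))\<^sup>2 / 2 \<le> (h 0)\<^sup>2 + Ch\<^sup>2 * (u i)\<^sup>2" using h_square_le[of "u i"] by simp
    from mult_left_mono[OF this, of \<Delta>]
    show "\<Delta> * (h (u i))\<^sup>2 / 2 \<le> \<Delta> * ((h 0)\<^sup>2 + Ch\<^sup>2 * (u i)\<^sup>2)" using \<Delta>_pos by simp
  qed
  also have "\<dots> = real n * \<Delta> * (h 0)\<^sup>2 + Ch\<^sup>2 * (\<Sum>i=1..n. \<Delta> * (u i)\<^sup>2)"
    by (simp add: sum.distrib sum_distrib_left algebra_simps)
  also have "real n * \<Delta> = 1" using n by (simp add: dx_def)
  finally show ?thesis using mult_left_mono[OF V2, of "Ch\<^sup>2"] unfolding V2_def by simp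
qed

text \<open>The bound depends on the data only, not on n, delta or the solution; this makes C17 uniform.\<close>
definition "flux_bound = 2 / \<delta>h * ((h 0)\<^sup>2 + Ch\<^sup>2 * (\<integral>x. indicator {0<..<1} x * (v0 x)\<^sup>2 \<partial>lborel)
    + Ch * Cb\<^sup>2 / 2 * (\<integral>q. indicator (Qset T) q * (p q)\<^sup>2 \<partial>lborel))"

lemma flux_bound_nonneg: "flux_bound \<ge> 0"
  using \<delta>h h'_bounds[of 0] integral_indicator_square_nonneg unfolding flux_bound_def
  by (intro mult_nonneg_nonneg add_nonneg_nonneg) auto

lemma nn_integral_flux_norm2_le: "(\<integral>\<^sup>+ t. ennreal (indicator {0..T} t * flux_norm2 t) \<partial>lborel) \<le> ennreal flux_bound"
proof -
  have "Ch * Cb\<^sup>2 / 2 * integral {0..T} rho_norm2 \<le> Ch * Cb\<^sup>2 / 2 * (\<integral>q. indicator (Qset T) q * (p q)\<^sup>2 \<partial>lborel)"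
    using integral_rho_norm2_le \<delta>h h'_bounds[of 0] by (intro mult_left_mono) auto
  then have "\<delta>h / 2 * integral {0..T} flux_norm2 \<le> \<delta>h / 2 * flux_bound"
    using integral_flux_norm2_le_energy energy_0_le \<delta>h unfolding flux_bound_def by simp
  then have "integral {0..T} flux_norm2 \<le> flux_bound"
    using \<delta>h by simp
  moreover have "(\<integral>\<^sup>+ t. ennreal (indicator {0..T} t * flux_norm2 t) \<partial>lborel) = ennreal (integral {0..T} flux_norm2)"
    using continuous_on_flux_norm2 flux_norm2_nonneg
    by (intro nn_integral_has_integral_lebesgue integrable_integral integrable_continuous_interval) auto
  ultimately show ?thesis by (simp add: ennreal_leI)
qed

end

section \<open>The duality estimate\<close>

context scheme_solution
begin

lemma deriv_h_vpc:
  assumes t: "t \<in> {0<..<T}" and x: "x \<in> cell n j" and j: "j \<in> {1..n}"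
  shows "deriv (\<lambda>s. h (vpc n v s x)) t = h' (v j t) * vd j t"
proof -
  have ti: "t \<in> interior {0..T}" using t by simp
  have "((\<lambda>s. h (v j s)) has_real_derivative h' (v j t) * vd j t) (at t within {0..T})"
    using t by (intro DERIV_chain2[OF h_deriv v_has_derivative[OF j]]) auto
  then have "((\<lambda>s. h (v j s)) has_real_derivative h' (v j t) * vd j t) (at t)"
    unfolding at_within_interior[OF ti] .
  then show ?thesis using vpc_eq_cell[OF n x j] by (simp add: DERIV_imp_deriv)
qed

lemma indicator_mult_deriv_h_vpc_eq_sum:
  assumes t: "t \<in> {0<..<T}"
  shows "indicator {0<..<1} x * (deriv (\<lambda>s. h (vpc n v s x)) t * u x)
    = (\<Sum>j=1..n. h' (v j t) * vd j t * (indicator (cell n j) x * (indicator {0<..<1} x * u x)))"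
proof (cases "x \<in> {0<..<1}")
  case True
  define d where "d j = h' (v j t) * vd j t" for j
  obtain j where j: "j \<in> {1..n}" "x \<in> cell n j" using ex_cell[OF n, of x] True by auto
  have "(\<Sum>i=1..n. d i * (indicator (cell n i) x * (indicator {0<..<1} x * u x)))
      = d j * (indicator (cell n j) x * (indicator {0<..<1} x * u x))
        + (\<Sum>i\<in>{1..n} - {j}. d i * (indicator (cell n i) x * (indicator {0<..<1} x * u x)))"
    using j by (simp add: sum.remove)
  also have "(\<Sum>i\<in>{1..n} - {j}. d i * (indicator (cell n i) x * (indicator {0<..<1} x * u x))) = 0"
    using cell_unique[OF n j(2)] by (intro sum.neutral) (auto simp: indicator_def)
  finally show ?thesis using deriv_h_vpc[OF t j(2,1)] True j by (simp add: d_def)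
qed simp

text \<open>Summation by parts moves the difference quotient of the scheme onto the cell integrals of
  the test function.\<close>
lemma integral_deriv_h_vpc_eq:
  assumes t: "t \<in> {0<..<T}" and [measurable]: "u \<in> borel_measurable borel"
    and ui: "integrable lborel (\<lambda>x. indicator {0<..<1} x * u x)"
  defines "E j \<equiv> \<integral>x. indicator {(real j - 1) * \<Delta><..<(real j - 1) * \<Delta> + \<Delta>} x * u x \<partial>lborel"
  shows "(\<integral>x. indicator {0<..<1} x * (deriv (\<lambda>s. h (vpc n v s x)) t * u x) \<partial>lborel)
    = - (1 / \<Delta>) * (\<Sum>j=1..n-1. a j t * (E (j + 1) - E j))"
proof -
  define d where "d j = h' (v j t) * vd j t" for j
  note pointwise = indicator_mult_deriv_h_vpc_eq_sum[OF t, of _ u, folded d_def]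
  have int_cell: "integrable lborel (\<lambda>x. indicator (cell n j) x * (indicator {0<..<1} x * u x))" for j
  proof (rule Bochner_Integration.integrable_bound[OF ui])
    show "(\<lambda>x. indicator (cell n j) x * (indicator {0<..<1} x * u x)) \<in> borel_measurable lborel"
      by measurable
  qed (auto simp: indicator_def)
  have cell_integral: "(\<integral>x. indicator (cell n j) x * (indicator {0<..<1} x * u x) \<partial>lborel) = E j"
    if "j \<in> {1..n}" for j
    unfolding E_def by (rule integral_cell_eq_interval[OF n that]) measurable
  have "(\<integral>x. indicator {0<..<1} x * (deriv (\<lambda>s. h (vpc n v s x)) t * u x) \<partial>lborel)
      = (\<Sum>j=1..n. d j * E j)"
    unfolding pointwise using int_cell
    by (subst Bochner_Integration.integral_sum) (auto simp: cell_integral)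
  also have "\<dots> = (\<Sum>j=1..n. (1 / \<Delta>) * (E j * (a j t - a (j - 1) t)))"
  proof (rule sum.cong[OF refl])
    fix j assume j: "j \<in> {1..n}"
    have "a j t - a (j - 1) t = \<Delta> * d j" using scheme_eq[OF j, of t] t \<Delta>_pos by (simp add: d_def)
    then show "d j * E j = (1 / \<Delta>) * (E j * (a j t - a (j - 1) t))" using \<Delta>_pos by simp
  qed
  also have "\<dots> = (1 / \<Delta>) * (\<Sum>j=1..n. E j * (a j t - a (j - 1) t))"
    by (simp add: sum_distrib_left)
  also have "(\<Sum>j=1..n. E j * (a j t - a (j - 1) t)) = - (\<Sum>j=1..n-1. a j t * (E (j + 1) - E j))"
    using sum_by_parts_vanishing[OF n, where z=E and f="\<lambda>j. a j t"] a_0 a_eq_0 by simp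
  finally show ?thesis by simp
qed

lemma abs_integral_deriv_h_vpc_le:
  assumes t: "t \<in> {0<..<T}" and wd: "weak_deriv01 u u'"
    and um[measurable]: "u \<in> borel_measurable borel" and u'm[measurable]: "u' \<in> borel_measurable borel"
    and u2: "integrable lborel (\<lambda>x. indicator {0<..<1} x * (u x)\<^sup>2)"
    and u'2: "integrable lborel (\<lambda>x. indicator {0<..<1} x * (u' x)\<^sup>2)"
    and \<kappa>: "\<kappa> > 0"
  shows "\<bar>\<integral>x. indicator {0<..<1} x * (deriv (\<lambda>s. h (vpc n v s x)) t * u x) \<partial>lborel\<bar>
    \<le> \<kappa> / 2 * flux_norm2 t + 2 / \<kappa> * (\<integral>x. indicator {0<..<1} x * (u' x)\<^sup>2 \<partial>lborel)"
proof -
  define c where "c j = (real j - 1) * \<Delta>" for j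
  define E where "E j = (\<integral>x. indicator {c j<..<c j + \<Delta>} x * u x \<partial>lborel)" for j
  define Y where "Y j = (\<integral>x. indicator {c j<..<c j + 2 * \<Delta>} x * \<bar>u' x\<bar> \<partial>lborel)" for j
  have ui: "integrable lborel (\<lambda>x. indicator {0<..<1} x * u x)"
    by (rule integrable_interval_if_square_integrable[OF um u2])
  have u'i: "integrable lborel (\<lambda>x. indicator {0<..<1} x * u' x)"
    by (rule integrable_interval_if_square_integrable[OF u'm u'2])
  have jump: "\<bar>E (j + 1) - E j\<bar> \<le> \<Delta> * Y j" if "j \<in> {1..n-1}" for j
  proof -
    have "c j \<ge> 0" "c j + 2 * \<Delta> \<le> 1" using that n by (auto simp: c_def dx_def field_simps)
    moreover have "c (j + 1) = c j + \<Delta>" by (simp add: c_def algebra_simps)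
    ultimately show ?thesis
      using weak_deriv01_adjacent_integrals_diff[OF wd um ui u'm u'i _ _ \<Delta>_pos, of "c j"]
      unfolding E_def Y_def by (simp add: abs_minus_commute add.assoc)
  qed
  have "\<bar>\<integral>x. indicator {0<..<1} x * (deriv (\<lambda>s. h (vpc n v s x)) t * u x) \<partial>lborel\<bar>
      = (1 / \<Delta>) * \<bar>\<Sum>j=1..n-1. a j t * (E (j + 1) - E j)\<bar>"
    using integral_deriv_h_vpc_eq[OF t um ui] \<Delta>_pos unfolding E_def c_def by (simp add: abs_mult)
  also have "\<dots> \<le> (1 / \<Delta>) * (\<Sum>j=1..n-1. \<bar>a j t\<bar> * (\<Delta> * Y j))"
    using jump \<Delta>_pos
    by (intro mult_left_mono order_trans[OF sum_abs] sum_mono) (auto simp: abs_mult intro: mult_left_mono)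
  also have "\<dots> = (\<Sum>j=1..n-1. \<bar>a j t\<bar> * Y j)"
    using \<Delta>_pos by (simp add: sum_distrib_left)
  also have "\<dots> \<le> (\<Sum>j=1..n-1. \<kappa> / 2 * \<Delta> * (a j t)\<^sup>2 + (Y j)\<^sup>2 / (2 * \<kappa> * \<Delta>))"
    by (intro sum_mono abs_mult_le_AM_GM \<kappa> \<Delta>_pos)
  also have "\<dots> = \<kappa> / 2 * flux_norm2 t + (\<Sum>j=1..n-1. (Y j)\<^sup>2) / (2 * \<kappa> * \<Delta>)"
    unfolding flux_norm2_def by (simp add: sum.distrib sum_distrib_left sum_divide_distrib algebra_simps)
  also have "\<dots> \<le> \<kappa> / 2 * flux_norm2 t + 4 * \<Delta> * (\<integral>x. indicator {0<..<1} x * (u' x)\<^sup>2 \<partial>lborel) / (2 * \<kappa> * \<Delta>)"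
    unfolding Y_def c_def
    by (intro add_left_mono divide_right_mono sum_square_double_cell_integrals_le[OF n u'm u'2])
       (use \<kappa> \<Delta>_pos in simp)
  also have "\<dots> = \<kappa> / 2 * flux_norm2 t + 2 / \<kappa> * (\<integral>x. indicator {0<..<1} x * (u' x)\<^sup>2 \<partial>lborel)"
    using \<kappa> \<Delta>_pos by (simp add: field_simps)
  finally show ?thesis .
qed

lemma AE_abs_integral_deriv_h_vpc_le:
  assumes L: "in_L2X T \<eta> \<eta>x" and \<kappa>: "\<kappa> > 0"
  shows "AE t in lborel.
    ennreal \<bar>indicator {0<..<T} t * (\<integral>x. indicator {0<..<1} x * (deriv (\<lambda>s. h (vpc n v s x)) t * \<eta> (t, x)) \<partial>lborel)\<bar>
    \<le> ennreal (\<kappa> / 2) * ennreal (indicator {0..T} t * flux_norm2 t)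
      + ennreal (2 / \<kappa>) * (\<integral>\<^sup>+ x. ennreal (indicator (Qset T) (t, x) * (\<eta>x (t, x))\<^sup>2) \<partial>lborel)"
  using in_L2X_AE_slices[OF L]
proof eventually_elim
  case (elim t)
  show ?case
  proof (cases "t \<in> {0<..<T}")
    case True
    define G where "G = (\<integral>x. indicator {0<..<1} x * (\<eta>x (t, x))\<^sup>2 \<partial>lborel)"
    from L have [measurable]: "\<eta> \<in> borel_measurable borel" "\<eta>x \<in> borel_measurable borel"
      unfolding in_L2X_def by auto
    from elim True have "\<bar>\<integral>x. indicator {0<..<1} x * (deriv (\<lambda>s. h (vpc n v s x)) t * \<eta> (t, x)) \<partial>lborel\<bar>
        \<le> \<kappa> / 2 * flux_norm2 t + 2 / \<kappa> * G"
      unfolding G_def by (intro abs_integral_deriv_h_vpc_le[OF True _ _ _ _ _ \<kappa>]) auto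
    moreover have "(\<integral>\<^sup>+ x. ennreal (indicator (Qset T) (t, x) * (\<eta>x (t, x))\<^sup>2) \<partial>lborel) = ennreal G"
    proof -
      have "indicator (Qset T) (t, x) = (indicator {0<..<1} x :: real)" for x
        using True by (simp add: Qset_def indicator_def)
      then show ?thesis
        using elim True unfolding G_def by (simp add: nn_integral_eq_integral)
    qed
    moreover have "G \<ge> 0" unfolding G_def by (rule integral_indicator_square_nonneg)
    ultimately show ?thesis
      using True \<kappa> flux_norm2_nonneg[of t]
      by (simp add: ennreal_mult[symmetric] ennreal_plus[symmetric] del: ennreal_plus ennreal_mult')
  qed simp
qed

lemma abs_integral_deriv_h_vpc_le_AM_GM:
  assumes L: "in_L2X T \<eta> \<eta>x" and \<kappa>: "\<kappa> > 0"
  shows "\<bar>\<integral>t. indicator {0<..<T} t * (\<integral>x. indicator {0<..<1} x * (deriv (\<lambda>s. h (vpc n v s x)) t * \<eta> (t, x)) \<partial>lborel) \<partial>lborel\<bar>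
    \<le> \<kappa> / 2 * flux_bound + 2 / \<kappa> * (L2X_norm T \<eta> \<eta>x)\<^sup>2"
proof -
  from L have [measurable]: "\<eta>x \<in> borel_measurable borel" unfolding in_L2X_def by auto
  have [measurable]: "(\<lambda>t. indicator {0..T} t * flux_norm2 t) \<in> borel_measurable borel"
    using borel_measurable_continuous_on_indicator[OF _ continuous_on_flux_norm2] by simp
  have "ennreal \<bar>\<integral>t. indicator {0<..<T} t * (\<integral>x. indicator {0<..<1} x * (deriv (\<lambda>s. h (vpc n v s x)) t * \<eta> (t, x)) \<partial>lborel) \<partial>lborel\<bar>
      \<le> (\<integral>\<^sup>+ t. ennreal \<bar>indicator {0<..<T} t * (\<integral>x. indicator {0<..<1} x * (deriv (\<lambda>s. h (vpc n v s x)) t * \<eta> (t, x)) \<partial>lborel)\<bar> \<partial>lborel)"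
    by (rule ennreal_abs_integral_le)
  also have "\<dots> \<le> (\<integral>\<^sup>+ t. ennreal (\<kappa> / 2) * ennreal (indicator {0..T} t * flux_norm2 t)
      + ennreal (2 / \<kappa>) * (\<integral>\<^sup>+ x. ennreal (indicator (Qset T) (t, x) * (\<eta>x (t, x))\<^sup>2) \<partial>lborel) \<partial>lborel)"
    by (rule nn_integral_mono_AE[OF AE_abs_integral_deriv_h_vpc_le[OF L \<kappa>]])
  also have "\<dots> = ennreal (\<kappa> / 2) * (\<integral>\<^sup>+ t. ennreal (indicator {0..T} t * flux_norm2 t) \<partial>lborel)
      + ennreal (2 / \<kappa>) * (\<integral>\<^sup>+ t. (\<integral>\<^sup>+ x. ennreal (indicator (Qset T) (t, x) * (\<eta>x (t, x))\<^sup>2) \<partial>lborel) \<partial>lborel)"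
    by (subst nn_integral_add) (auto simp: nn_integral_cmult)
  also have "\<dots> \<le> ennreal (\<kappa> / 2) * ennreal flux_bound + ennreal (2 / \<kappa>) * ennreal ((L2X_norm T \<eta> \<eta>x)\<^sup>2)"
    by (intro add_mono mult_left_mono nn_integral_flux_norm2_le nn_integral_slices_le_L2X_norm[OF L]) auto
  also have "\<dots> = ennreal (\<kappa> / 2 * flux_bound + 2 / \<kappa> * (L2X_norm T \<eta> \<eta>x)\<^sup>2)"
    using \<kappa> flux_bound_nonneg by (intro ennreal_mult_plus_mult) auto
  finally show ?thesis
    using \<kappa> flux_bound_nonneg by (subst (asm) ennreal_le_iff) auto
qed

lemma abs_integral_deriv_h_vpc_le_L2X_norm:
  assumes "in_L2X T \<eta> \<eta>x"
  shows "\<bar>\<integral>t. indicator {0<..<T} t * (\<integral>x. indicator {0<..<1} x * (deriv (\<lambda>s. h (vpc n v s x)) t * \<eta> (t, x)) \<partial>lborel) \<partial>lborel\<bar>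
    \<le> 2 * sqrt (flux_bound + 1) * L2X_norm T \<eta> \<eta>x"
proof (rule le_two_sqrt_mult_if_AM_GM_bounds)
  fix \<kappa> :: real assume "\<kappa> > 0"
  with abs_integral_deriv_h_vpc_le_AM_GM[OF assms this]
  show "\<bar>\<integral>t. indicator {0<..<T} t * (\<integral>x. indicator {0<..<1} x * (deriv (\<lambda>s. h (vpc n v s x)) t * \<eta> (t, x)) \<partial>lborel) \<partial>lborel\<bar>
      \<le> \<kappa> / 2 * (flux_bound + 1) + 2 / \<kappa> * (L2X_norm T \<eta> \<eta>x)\<^sup>2"
    by (smt (verit) divide_pos_pos mult_left_mono)
qed (use flux_bound_nonneg in \<open>auto simp: L2X_norm_def\<close>)

end

theorem lemma4p2:
  fixes T \<delta>h Ch \<delta>b Cb :: real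
    and h h' h'' b b' b'' v0 :: "real \<Rightarrow> real"
    and p :: "real \<times> real \<Rightarrow> real"
  assumes T: "T > 0"
    and pos: "\<delta>h > 0" "Ch > 0" "\<delta>b > 0" "Cb > 0"
    and h1: "\<And>u. (h has_real_derivative h' u) (at u)"
    and h2: "\<And>u. (h' has_real_derivative h'' u) (at u)"
    and h2c: "continuous_on UNIV h''"
    and hbd: "\<And>u. \<delta>h \<le> h' u \<and> h' u \<le> Ch" "\<And>u. \<bar>h'' u\<bar> \<le> Ch"
    and b1: "\<And>u. (b has_real_derivative b' u) (at u)"
    and b2: "\<And>u. (b' has_real_derivative b'' u) (at u)"
    and b2c: "continuous_on UNIV b''"
    and bbd: "\<And>u. \<delta>b \<le> b u \<and> b u \<le> Cb" "\<And>u. \<bar>b' u\<bar> \<le> Cb" "\<And>u. \<bar>b'' u\<bar> \<le> Cb"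
    and p: "p \<in> borel_measurable borel" "set_integrable lborel (Qset T) (\<lambda>q. (p q)\<^sup>2)"
    and v0: "v0 \<in> borel_measurable borel" "set_integrable lborel {0<..<1} (\<lambda>x. (v0 x)\<^sup>2)"
  shows "\<exists>C17 > 0. \<forall>n::nat. \<forall>\<delta>::real. \<forall>v vd.
           n \<ge> 1 \<and> \<delta> > 0 \<and> is_scheme_solution T h' b p v0 n \<delta> v vd \<longrightarrow>
           (\<forall>\<eta> \<eta>x. in_L2X T \<eta> \<eta>x \<longrightarrow>
              \<bar>\<integral>t. indicator {0<..<T} t *
                   (\<integral>x. indicator {0<..<1} x *
                        (deriv (\<lambda>s. h (vpc n v s x)) t * \<eta> (t, x)) \<partial>lborel) \<partial>lborel\<bar>
              \<le> C17 * L2X_norm T \<eta> \<eta>x)"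
proof -
  define K where "K = 2 / \<delta>h * ((h 0)\<^sup>2 + Ch\<^sup>2 * (\<integral>x. indicator {0<..<1} x * (v0 x)\<^sup>2 \<partial>lborel)
    + Ch * Cb\<^sup>2 / 2 * (\<integral>q. indicator (Qset T) q * (p q)\<^sup>2 \<partial>lborel))"
  have "K \<ge> 0"
    using pos integral_indicator_square_nonneg unfolding K_def
    by (intro mult_nonneg_nonneg add_nonneg_nonneg) auto
  \<comment> \<open>Only the bounds on h' and b enter.\<close>
  have h'_cont: "continuous_on UNIV h'"
    by (rule DERIV_continuous_on[OF has_field_derivative_at_within[OF h2]])
  have b_cont: "continuous_on UNIV b"
    by (rule DERIV_continuous_on[OF has_field_derivative_at_within[OF b1]])
  show ?thesis
  proof (intro exI[of _ "2 * sqrt (K + 1)"] conjI allI impI)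
    show "2 * sqrt (K + 1) > 0" using \<open>K \<ge> 0\<close> by simp
    fix n :: nat and \<delta> :: real and v vd \<eta> \<eta>x
    assume "1 \<le> n \<and> 0 < \<delta> \<and> is_scheme_solution T h' b p v0 n \<delta> v vd" and "in_L2X T \<eta> \<eta>x"
    interpret scheme_solution T \<delta>h Ch \<delta>b Cb h h' b p v0 n \<delta> v vd
      using T pos h1 h'_cont hbd(1) b_cont bbd(1) p v0 \<open>1 \<le> n \<and> 0 < \<delta> \<and> _\<close>
      by unfold_locales auto
    have "flux_bound = K" by (simp add: flux_bound_def K_def)
    then show "\<bar>\<integral>t. indicator {0<..<T} t * (\<integral>x. indicator {0<..<1} x *
        (deriv (\<lambda>s. h (vpc n v s x)) t * \<eta> (t, x)) \<partial>lborel) \<partial>lborel\<bar> \<le> 2 * sqrt (K + 1) * L2X_norm T \<eta> \<eta>x"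
      using abs_integral_deriv_h_vpc_le_L2X_norm[OF \<open>in_L2X T \<eta> \<eta>x\<close>] by simp
  qed
qed

end
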